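(* Let $T=(V,E,F)$ be a triangulated surface and $\phi:|T|\to\mathbb C$ a geodesic homeomorphism whose induced PL metric $l$ is uniformly nondegenerate and Delaunay. Define $\mu\in\mathbb R_{\ge0}^E$ by $\mu_{ij}=\frac12(\cot\theta^{k_1}_{ij}+\cot\theta^{k_2}_{ij})$, where $\triangle ijk_1,\triangle ijk_2$ are the two triangles adjacent to the edge $ij$. If $u:V\to\mathbb R$ is bounded and $\sum_{j:ij\in E}\mu_{ij}(u_j-u_i)=0$ for every $i\in V$, then $u$ is constant.
   Context: $\theta^i_{jk}$ is the inner angle at $\phi(i)$ of the image triangle $\phi(\triangle ijk)$. $l$ is uniformly nondegenerate if there is $\epsilon>0$ with all $\theta^i_{jk}\ge\epsilon$, and Delaunay if $\theta^{k_1}_{ij}+\theta^{k_2}_{ij}\le\pi$ for every pair of adjacent triangles (hence $\mu_{ij}\ge0$). A geodesic homeomorphism $\phi:|T|\to\mathbb C$ maps each edge to the straight segment between the images of its endpoints and maps $|T|$ homeomorphically onto $\mathbb C$; it induces $l_{ij}=|\phi(i)-\phi(j)|$. *)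

theory Defs
  imports "HOL-Analysis.Analysis"
begin

text \<open>Combinatorial triangulated surface (without boundary) T = (V,E,F):
  faces are 3-element vertex sets, every vertex lies in a face, every edge lies
  in exactly two faces, every vertex star is finite and its link is connected
  (hence a single cycle).\<close>

definition tri_edges :: "'v set set \<Rightarrow> 'v set set" where
  "tri_edges F = {e. card e = 2 \<and> (\<exists>f\<in>F. e \<subseteq> f)}"

definition link_rel :: "'v set set \<Rightarrow> 'v \<Rightarrow> 'v \<Rightarrow> 'v \<Rightarrow> bool" where
  "link_rel F v j k \<longleftrightarrow> {v, j, k} \<in> F \<and> j \<noteq> k \<and> j \<noteq> v \<and> k \<noteq> v"

definition link_vertices :: "'v set set \<Rightarrow> 'v \<Rightarrow> 'v set" where
  "link_vertices F v = {j. \<exists>k. link_rel F v j k}"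

definition tri_surface :: "'v set \<Rightarrow> 'v set set \<Rightarrow> bool" where
  "tri_surface V F \<longleftrightarrow>
     (\<forall>f\<in>F. f \<subseteq> V \<and> card f = 3) \<and>
     (\<forall>v\<in>V. \<exists>f\<in>F. v \<in> f) \<and>
     (\<forall>e\<in>tri_edges F. card {f\<in>F. e \<subseteq> f} = 2) \<and>
     (\<forall>v\<in>V. finite {f\<in>F. v \<in> f}) \<and>
     (\<forall>v\<in>V. \<forall>j\<in>link_vertices F v. \<forall>k\<in>link_vertices F v. (link_rel F v)\<^sup>*\<^sup>* j k)"

text \<open>Geodesic homeomorphism |T| \<rightarrow> C, described by the images p of the vertices:
  every face maps onto the (nondegenerate) straight triangle spanned by its vertex images,
  distinct simplices meet exactly in the image of their common face, the triangles cover C,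
  and the triangulation is locally finite (needed for a homeomorphism onto C).\<close>

definition geodesic_homeo :: "'v set \<Rightarrow> 'v set set \<Rightarrow> ('v \<Rightarrow> complex) \<Rightarrow> bool" where
  "geodesic_homeo V F p \<longleftrightarrow>
     inj_on p V \<and>
     (\<forall>f\<in>F. \<not> collinear (p ` f)) \<and>
     (\<forall>f\<in>F. \<forall>g\<in>F. convex hull (p ` f) \<inter> convex hull (p ` g) = convex hull (p ` (f \<inter> g))) \<and>
     (\<Union>f\<in>F. convex hull (p ` f)) = UNIV \<and>
     (\<forall>K. compact K \<longrightarrow> finite {f\<in>F. convex hull (p ` f) \<inter> K \<noteq> {}})"

definition inner_angle :: "complex \<Rightarrow> complex \<Rightarrow> complex \<Rightarrow> real" where
  "inner_angle a b c = arccos (((b - a) \<bullet> (c - a)) / (norm (b - a) * norm (c - a)))"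

definition theta :: "('v \<Rightarrow> complex) \<Rightarrow> 'v \<Rightarrow> 'v \<Rightarrow> 'v \<Rightarrow> real" where
  "theta p i j k = inner_angle (p i) (p j) (p k)"

definition unif_nondegenerate :: "'v set set \<Rightarrow> ('v \<Rightarrow> complex) \<Rightarrow> bool" where
  "unif_nondegenerate F p \<longleftrightarrow>
     (\<exists>\<epsilon>>0. \<forall>i j k. {i, j, k} \<in> F \<and> card {i, j, k} = 3 \<longrightarrow> theta p i j k \<ge> \<epsilon>)"

definition delaunay :: "'v set set \<Rightarrow> ('v \<Rightarrow> complex) \<Rightarrow> bool" where
  "delaunay F p \<longleftrightarrow>
     (\<forall>i j k1 k2. {i, j, k1} \<in> F \<and> {i, j, k2} \<in> F \<and> card {i, j, k1} = 3 \<and> card {i, j, k2} = 3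
        \<and> k1 \<noteq> k2 \<longrightarrow> theta p k1 i j + theta p k2 i j \<le> pi)"

definition cot_weight :: "'v set set \<Rightarrow> ('v \<Rightarrow> complex) \<Rightarrow> 'v \<Rightarrow> 'v \<Rightarrow> real" where
  "cot_weight F p i j = (1/2) * (\<Sum>k\<in>{k. {i, j, k} \<in> F \<and> k \<noteq> i \<and> k \<noteq> j}. cot (theta p k i j))"

definition nbrs :: "'v set set \<Rightarrow> 'v \<Rightarrow> 'v set" where
  "nbrs F i = {j. {i, j} \<in> tri_edges F}"

end

theory Submission
  imports Defs
begin

text \<open>Each face carries a cotangent energy \<open>E\<^sub>f(x, y)\<close>, positive semidefinite on its own, with
  \<open>\<Sum>\<^sub>i w\<^sub>i (\<Delta>u)\<^sub>i = - \<Sum>\<^sub>f E\<^sub>f(u, w)\<close>. Testing \<open>\<Delta>u = 0\<close> against \<open>\<eta>\<^sup>2u\<close> for a cutoff \<open>\<eta>\<close> gives a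
  Caccioppoli inequality: \<open>E\<^sub>f(u, u) \<le> C M\<^sup>2 \<Sum>\<^sub>g osc\<^sub>g(\<eta>)\<^sup>2\<close> on every face where \<open>\<eta> = 1\<close>.
  Angles bounded below make all faces fat, so vertex degrees are bounded, the edges at a vertex have
  comparable lengths, and a face far out at distance \<open>r\<close> has diameter \<open>O(r)\<close>. Hence a ramp from \<open>1\<close>
  on \<open>|z| \<le> s\<close> to \<open>0\<close> on \<open>|z| \<ge> 2s\<close> has \<open>\<Sum> osc\<^sup>2\<close> bounded independently of \<open>s\<close>, and the average
  of \<open>N\<close> dyadic ramps has \<open>\<Sum> osc\<^sup>2 = O(1/N)\<close>. So every \<open>E\<^sub>f(u, u)\<close> vanishes, \<open>u\<close> is constant on
  each face, and connectedness of the plane makes it globally constant.\<close>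

section \<open>Triangles in the plane\<close>

definition cross :: "complex \<Rightarrow> complex \<Rightarrow> real" where
  "cross z w = Re z * Im w - Im z * Re w"

lemma inner_square_plus_cross_square: "(z \<bullet> w)^2 + (cross z w)^2 = (cmod z)^2 * (cmod w)^2"
  unfolding cross_def inner_complex_def cmod_power2 by algebra

lemma abs_cross_le: "\<bar>cross z w\<bar> \<le> cmod z * cmod w"
proof -
  have "(cross z w)^2 \<le> (cmod z * cmod w)^2"
    using inner_square_plus_cross_square[of z w] by (simp add: power_mult_distrib) (smt (verit) zero_le_power2)
  hence "\<bar>cross z w\<bar> \<le> \<bar>cmod z * cmod w\<bar>" by (simp only: abs_le_square_iff)
  thus ?thesis by simp
qed

lemma cross_scaleR: "cross (a *\<^sub>R z) (b *\<^sub>R w) = a * b * cross z w"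
  unfolding cross_def by (simp add: algebra_simps)

lemma cross_triangle_permute:
  "cross (C - A) (B - A) = - cross (B - A) (C - A)"
  "cross (A - B) (C - B) = - cross (B - A) (C - A)"
  "cross (C - B) (A - B) = cross (B - A) (C - A)"
  "cross (A - C) (B - C) = cross (B - A) (C - A)"
  "cross (B - C) (A - C) = - cross (B - A) (C - A)"
  unfolding cross_def by (simp_all add: algebra_simps)

lemma cross_nonzero_if_not_collinear:
  assumes "\<not> collinear {A, B, C}"
  shows "cross (B - A) (C - A) \<noteq> 0"
proof
  assume h: "cross (B - A) (C - A) = 0"
  define z where "z = B - A"
  define w where "w = C - A"
  have "z \<noteq> 0"
  proof
    assume "z = 0"
    hence "{A, B, C} = {A, C}" by (simp add: z_def)
    thus False using assms collinear_2 by metis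
  qed
  hence zz: "(cmod z)^2 > 0" by simp
  have cz: "Re z * Im w - Im z * Re w = 0" using h by (simp add: z_def w_def cross_def)
  have "(cmod z)^2 *\<^sub>R w = (w \<bullet> z) *\<^sub>R z"
  proof -
    have "(Re z ^ 2 + Im z ^ 2) * Re w = (Re w * Re z + Im w * Im z) * Re z" using cz by algebra
    moreover have "(Re z ^ 2 + Im z ^ 2) * Im w = (Re w * Re z + Im w * Im z) * Im z" using cz by algebra
    ultimately show ?thesis unfolding complex_eq_iff cmod_power2 inner_complex_def by simp
  qed
  hence "(1 / (cmod z)^2) *\<^sub>R ((cmod z)^2 *\<^sub>R w) = (1 / (cmod z)^2) *\<^sub>R ((w \<bullet> z) *\<^sub>R z)" by simp
  hence "w = ((w \<bullet> z) / (cmod z)^2) *\<^sub>R z" using zz by simp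
  hence "C = ((w \<bullet> z) / (cmod z)^2) *\<^sub>R B + (1 - (w \<bullet> z) / (cmod z)^2) *\<^sub>R A"
    unfolding w_def z_def by (simp add: algebra_simps)
  hence "\<exists>t. C = t *\<^sub>R B + (1 - t) *\<^sub>R A" by blast
  hence "collinear {B, C, A}" unfolding collinear_3_expand by blast
  thus False using assms by (simp add: insert_commute)
qed

lemma inner_angle_commute: "inner_angle a b c = inner_angle a c b"
  unfolding inner_angle_def by (simp add: inner_commute mult.commute)

lemma inner_angle_trig:
  assumes X: "cross (b - a) (c - a) \<noteq> 0"
  shows "cos (inner_angle a b c) = ((b - a) \<bullet> (c - a)) / (cmod (b - a) * cmod (c - a))"
    and "sin (inner_angle a b c) = \<bar>cross (b - a) (c - a)\<bar> / (cmod (b - a) * cmod (c - a))"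
    and "cot (inner_angle a b c) = ((b - a) \<bullet> (c - a)) / \<bar>cross (b - a) (c - a)\<bar>"
    and "inner_angle a b c \<le> pi"
proof -
  define P where "P = b - a"
  define Q where "Q = c - a"
  have XP: "cross P Q \<noteq> 0" using X by (simp add: P_def Q_def)
  hence "P \<noteq> 0" "Q \<noteq> 0" by (auto simp: cross_def)
  define n where "n = cmod P * cmod Q"
  have n0: "n > 0" using \<open>P \<noteq> 0\<close> \<open>Q \<noteq> 0\<close> by (simp add: n_def)
  define t where "t = (P \<bullet> Q) / n"
  have "(P \<bullet> Q)^2 + (cross P Q)^2 = n^2"
    using inner_square_plus_cross_square[of P Q] by (simp add: n_def power_mult_distrib)
  hence t2: "1 - t^2 = (cross P Q / n)^2" using n0 by (simp add: t_def power_divide field_simps)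
  hence "t^2 \<le> 1" by (smt (verit) zero_le_power2)
  hence "\<bar>t\<bar> \<le> 1" by (simp only: abs_square_le_1)
  hence tb: "-1 \<le> t" "t \<le> 1" by simp_all
  have ia: "inner_angle a b c = arccos t" by (simp add: inner_angle_def t_def n_def P_def Q_def)
  have c1: "cos (inner_angle a b c) = t" using ia tb by simp
  have s1: "sin (inner_angle a b c) = \<bar>cross P Q\<bar> / n"
    using ia tb t2 n0 by (simp add: sin_arccos abs_div)
  show "cos (inner_angle a b c) = ((b - a) \<bullet> (c - a)) / (cmod (b - a) * cmod (c - a))"
    using c1 by (simp add: t_def n_def P_def Q_def)
  show "sin (inner_angle a b c) = \<bar>cross (b - a) (c - a)\<bar> / (cmod (b - a) * cmod (c - a))"
    using s1 by (simp add: n_def P_def Q_def)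
  show "cot (inner_angle a b c) = ((b - a) \<bullet> (c - a)) / \<bar>cross (b - a) (c - a)\<bar>"
    using c1 s1 n0 XP by (simp add: cot_def t_def P_def Q_def n_def)
  show "inner_angle a b c \<le> pi" using ia tb arccos_bounded by auto
qed

text \<open>The angle at \<open>a\<close> is acute because it faces a side that is not the longest.\<close>

lemma abs_cross_ge_sin_angle:
  assumes X: "cross (b - a) (c - a) \<noteq> 0" and e: "0 < e" "e \<le> pi/2"
    and angle: "e \<le> inner_angle a b c" and longest: "cmod (c - a) \<le> cmod (b - a)" "cmod (c - b) \<le> cmod (b - a)"
  shows "sin e * cmod (b - a) * cmod (c - a) \<le> \<bar>cross (b - a) (c - a)\<bar>"
proof -
  define P where "P = b - a"
  define Q where "Q = c - a"
  have "P \<noteq> 0" "Q \<noteq> 0" using X by (auto simp: cross_def P_def Q_def)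
  have "(cmod (Q - P))^2 = (cmod Q)^2 + (cmod P)^2 - 2 * (P \<bullet> Q)"
    unfolding cmod_power2 inner_complex_def by (simp add: power2_eq_square algebra_simps)
  moreover have "(cmod (Q - P))^2 \<le> (cmod P)^2"
    using longest(2) by (intro power_mono) (simp_all add: P_def Q_def)
  ultimately have "P \<bullet> Q > 0" using \<open>Q \<noteq> 0\<close> by (smt (verit) zero_less_norm_iff zero_less_power)
  hence "cos (inner_angle a b c) > 0"
    using inner_angle_trig(1)[OF X] \<open>P \<noteq> 0\<close> \<open>Q \<noteq> 0\<close> by (simp add: P_def Q_def)
  hence acute: "inner_angle a b c \<le> pi/2"
    using inner_angle_trig(4)[OF X] cos_gt_zero_pi[of "pi - inner_angle a b c"] by fastforce
  have "sin e \<le> sin (inner_angle a b c)"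
    using sin_mono_le_eq[of e "inner_angle a b c"] e angle acute by simp
  thus ?thesis using inner_angle_trig(2)[OF X] \<open>P \<noteq> 0\<close> \<open>Q \<noteq> 0\<close> by (simp add: field_simps P_def Q_def)
qed

lemma abs_cross_ge_sin_longest_side:
  assumes X: "cross (B - A) (C - A) \<noteq> 0" and e: "0 < e" "e \<le> pi/2"
    and angle: "e \<le> inner_angle A B C" "e \<le> inner_angle B A C"
    and longest: "cmod (C - A) \<le> cmod (B - A)" "cmod (C - B) \<le> cmod (B - A)"
  shows "sin e * (cmod (B - A))^2 / 2 \<le> \<bar>cross (B - A) (C - A)\<bar>"
proof -
  have n: "cmod (A - B) = cmod (B - A)" by (rule norm_minus_commute)
  have XB: "\<bar>cross (A - B) (C - B)\<bar> = \<bar>cross (B - A) (C - A)\<bar>"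
    using cross_triangle_permute(2)[of A B C] by simp
  have hA: "sin e * cmod (B - A) * cmod (C - A) \<le> \<bar>cross (B - A) (C - A)\<bar>"
    by (rule abs_cross_ge_sin_angle[OF X e angle(1) longest])
  have "sin e * cmod (A - B) * cmod (C - B) \<le> \<bar>cross (A - B) (C - B)\<bar>"
    by (rule abs_cross_ge_sin_angle) (use X XB e angle(2) longest n in auto)
  hence hB: "sin e * cmod (B - A) * cmod (C - B) \<le> \<bar>cross (B - A) (C - A)\<bar>" using XB n by simp
  have "cmod (B - A) \<le> cmod (C - A) + cmod (C - B)"
    using norm_triangle_ineq4[of "C - A" "C - B"] by simp
  hence "sin e * cmod (B - A) * cmod (B - A) \<le> sin e * cmod (B - A) * (cmod (C - A) + cmod (C - B))"
    using e sin_ge_zero[of e] by (intro mult_left_mono) auto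
  thus ?thesis using hA hB by (simp add: power2_eq_square distrib_left)
qed

lemma abs_cross_ge_sin_diam:
  assumes X: "cross (B - A) (C - A) \<noteq> 0" and e: "0 < e" "e \<le> pi/2"
    and angle: "e \<le> inner_angle A B C" "e \<le> inner_angle B C A" "e \<le> inner_angle C A B"
  shows "sin e * (max (cmod (B - A)) (max (cmod (C - B)) (cmod (A - C))))^2 / 2 \<le> \<bar>cross (B - A) (C - A)\<bar>"
proof -
  have XB: "cross (C - B) (A - B) = cross (B - A) (C - A)" and XC: "cross (A - C) (B - C) = cross (B - A) (C - A)"
    by (rule cross_triangle_permute(3), rule cross_triangle_permute(4))
  have angle': "e \<le> inner_angle B A C" "e \<le> inner_angle C B A" "e \<le> inner_angle A C B"
    using angle inner_angle_commute by metis+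
  have n: "cmod (A - B) = cmod (B - A)" "cmod (B - C) = cmod (C - B)" "cmod (C - A) = cmod (A - C)"
    by (simp_all add: norm_minus_commute)
  consider "cmod (C - B) \<le> cmod (B - A)" "cmod (A - C) \<le> cmod (B - A)"
    | "cmod (B - A) \<le> cmod (C - B)" "cmod (A - C) \<le> cmod (C - B)"
    | "cmod (B - A) \<le> cmod (A - C)" "cmod (C - B) \<le> cmod (A - C)" by linarith
  then show ?thesis
  proof cases
    case 1
    have "sin e * (cmod (B - A))^2 / 2 \<le> \<bar>cross (B - A) (C - A)\<bar>"
      using abs_cross_ge_sin_longest_side[OF X e angle(1) angle'(1)] 1 n by simp
    moreover have "max (cmod (B - A)) (max (cmod (C - B)) (cmod (A - C))) = cmod (B - A)"
      using 1 by (auto simp: max_def)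
    ultimately show ?thesis by simp
  next
    case 2
    have "sin e * (cmod (C - B))^2 / 2 \<le> \<bar>cross (C - B) (A - B)\<bar>"
      using abs_cross_ge_sin_longest_side[of C B A, OF _ e angle(2) angle'(2)] X XB 2 n by simp
    moreover have "max (cmod (B - A)) (max (cmod (C - B)) (cmod (A - C))) = cmod (C - B)"
      using 2 by (auto simp: max_def)
    ultimately show ?thesis using XB by simp
  next
    case 3
    have "sin e * (cmod (A - C))^2 / 2 \<le> \<bar>cross (A - C) (B - C)\<bar>"
      using abs_cross_ge_sin_longest_side[of A C B, OF _ e angle(3) angle'(3)] X XC 3 n by simp
    moreover have "max (cmod (B - A)) (max (cmod (C - B)) (cmod (A - C))) = cmod (A - C)"
      using 3 by (auto simp: max_def)
    ultimately show ?thesis using XC by simp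
  qed
qed

lemma abs_cross_le_dist_segment:
  assumes "y \<in> closed_segment B C"
  shows "\<bar>cross (B - A) (C - A)\<bar> \<le> cmod (y - A) * cmod (C - B)"
proof -
  obtain u where y: "y = (1 - u) *\<^sub>R B + u *\<^sub>R C" using assms by (auto simp: in_segment)
  have "cross (y - A) (C - B) = cross (B - A) (C - A)"
    unfolding y cross_def by (simp add: algebra_simps)
  thus ?thesis using abs_cross_le[of "y - A" "C - B"] by simp
qed

text \<open>Barycentric coordinates of \<open>x\<close> as ratios of signed areas.\<close>

lemma cross_barycentric_sum:
  "cross (B - x) (C - x) + cross (C - x) (A - x) + cross (A - x) (B - x) = cross (B - A) (C - A)"
  unfolding cross_def by (simp add: algebra_simps)

lemma cross_barycentric:
  "cross (B - A) (C - A) *\<^sub>R x =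
     cross (B - x) (C - x) *\<^sub>R A + cross (C - x) (A - x) *\<^sub>R B + cross (A - x) (B - x) *\<^sub>R C"
  unfolding cross_def by (simp add: complex_eq_iff algebra_simps)

lemma in_triangle_if_cross_same_sign:
  assumes X: "cross (B - A) (C - A) \<noteq> 0"
    and pos: "0 < cross (B - x) (C - x) / cross (B - A) (C - A)"
      "0 < cross (C - x) (A - x) / cross (B - A) (C - A)"
      "0 < cross (A - x) (B - x) / cross (B - A) (C - A)"
  shows "x \<in> convex hull {A, B, C}"
proof -
  define X where "X = cross (B - A) (C - A)"
  define la where "la = cross (B - x) (C - x) / X"
  define lb where "lb = cross (C - x) (A - x) / X"
  define lc where "lc = cross (A - x) (B - x) / X"
  have "la + lb + lc = 1"
  proof -
    have "cross (B - x) (C - x) + cross (C - x) (A - x) + cross (A - x) (B - x) = X"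
      unfolding X_def by (rule cross_barycentric_sum)
    thus ?thesis using X unfolding la_def lb_def lc_def X_def by (simp add: field_simps)
  qed
  moreover have "x = la *\<^sub>R A + lb *\<^sub>R B + lc *\<^sub>R C"
  proof -
    have h: "X *\<^sub>R x = cross (B - x) (C - x) *\<^sub>R A + cross (C - x) (A - x) *\<^sub>R B + cross (A - x) (B - x) *\<^sub>R C"
      unfolding X_def by (rule cross_barycentric)
    have "x = (1 / X) *\<^sub>R (X *\<^sub>R x)" using X X_def by simp
    thus ?thesis unfolding h la_def lb_def lc_def by (simp add: scaleR_add_right divide_inverse mult.commute)
  qed
  moreover have "0 < la" "0 < lb" "0 < lc" using pos by (simp_all add: la_def lb_def lc_def X_def)
  ultimately show ?thesis unfolding convex_hull_3
    by (intro CollectI exI[of _ la] exI[of _ lb] exI[of _ lc]) auto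
qed

lemma ball_centroid_subset_triangle:
  fixes A B C :: complex
  assumes X: "cross (B - A) (C - A) \<noteq> 0"
    and D: "cmod (B - A) \<le> D" "cmod (C - B) \<le> D" "cmod (A - C) \<le> D"
  shows "ball ((A + B + C) / 3) (\<bar>cross (B - A) (C - A)\<bar> / (3 * D)) \<subseteq> convex hull {A, B, C}"
proof
  fix x assume x: "x \<in> ball ((A + B + C) / 3) (\<bar>cross (B - A) (C - A)\<bar> / (3 * D))"
  define X where "X = cross (B - A) (C - A)"
  define d where "d = x - (A + B + C) / 3"
  have "B - A \<noteq> 0" using X by (auto simp: cross_def)
  hence "D > 0" using D(1) by (smt (verit) zero_less_norm_iff)
  hence dX: "cmod d * D < \<bar>X\<bar> / 3"
    using x unfolding d_def X_def by (simp add: dist_norm norm_minus_commute field_simps)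
  have pos: "0 < t / X" if t: "t = X / 3 - cross d w" and w: "cmod w \<le> D" for t w
  proof -
    have "\<bar>cross d w\<bar> \<le> cmod d * D"
      using abs_cross_le[of d w] mult_left_mono[OF w norm_ge_zero[of d]] by linarith
    hence small: "\<bar>cross d w\<bar> < \<bar>X\<bar> / 3" using dX by linarith
    show ?thesis
    proof (cases "X > 0")
      case True thus ?thesis using t small by (intro divide_pos_pos) auto
    next
      case False hence "X < 0" using X X_def by simp
      thus ?thesis using t small by (intro divide_neg_neg) auto
    qed
  qed
  have "cross (B - x) (C - x) = X / 3 - cross d (C - B)"
    unfolding d_def X_def cross_def by (simp add: field_simps)
  hence 1: "0 < cross (B - x) (C - x) / X" using pos D(2) by blast
  have "cross (C - x) (A - x) = X / 3 - cross d (A - C)"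
    unfolding d_def X_def cross_def by (simp add: field_simps)
  hence 2: "0 < cross (C - x) (A - x) / X" using pos D(3) by blast
  have "cross (A - x) (B - x) = X / 3 - cross d (B - A)"
    unfolding d_def X_def cross_def by (simp add: field_simps)
  hence 3: "0 < cross (A - x) (B - x) / X" using pos D(1) by blast
  show "x \<in> convex hull {A, B, C}"
    using in_triangle_if_cross_same_sign[OF X] 1 2 3 unfolding X_def by blast
qed

text \<open>The ball is centred at the centroid of the corner triangle cut off at distance \<open>\<delta>\<close> from \<open>A\<close>.\<close>

lemma ball_near_corner_subset_triangle:
  fixes A P Q :: complex
  assumes \<delta>: "0 < \<delta>" "\<delta> \<le> cmod P" "\<delta> \<le> cmod Q" and s: "0 < s" and fat: "s * cmod P * cmod Q \<le> \<bar>cross P Q\<bar>"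
  defines "P' \<equiv> (\<delta> / cmod P) *\<^sub>R P" and "Q' \<equiv> (\<delta> / cmod Q) *\<^sub>R Q"
  shows "ball (A + (P' + Q') / 3) (s * \<delta> / 6) \<subseteq> convex hull {A, A + P, A + Q} \<inter> ball A (2 * \<delta>)"
proof -
  have P0: "0 < cmod P" "0 < cmod Q" using \<delta> by linarith+
  have nP': "cmod P' = \<delta>" "cmod Q' = \<delta>" using P0 \<delta> by (simp_all add: P'_def Q'_def)
  have scale: "0 \<le> (\<delta> / cmod P) * (\<delta> / cmod Q)" using \<delta> P0 by simp
  have "s * \<delta>^2 = (\<delta> / cmod P) * (\<delta> / cmod Q) * (s * cmod P * cmod Q)"
    using P0 by (simp add: field_simps power2_eq_square)
  also have "\<dots> \<le> (\<delta> / cmod P) * (\<delta> / cmod Q) * \<bar>cross P Q\<bar>"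
    by (rule mult_left_mono[OF fat scale])
  also have "\<dots> = \<bar>cross P' Q'\<bar>"
    using scale by (simp add: P'_def Q'_def cross_scaleR abs_mult)
  finally have X: "s * \<delta>^2 \<le> \<bar>cross P' Q'\<bar>" .
  moreover have "0 < s * \<delta>^2" using s \<delta> by simp
  ultimately have X0: "cross ((A + P') - A) ((A + Q') - A) \<noteq> 0" by auto
  have "cmod (Q' - P') \<le> 2 * \<delta>" using norm_triangle_ineq4[of Q' P'] nP' by simp
  hence "ball ((A + (A + P') + (A + Q')) / 3) (\<bar>cross P' Q'\<bar> / (3 * (2 * \<delta>)))
      \<subseteq> convex hull {A, A + P', A + Q'}"
    using ball_centroid_subset_triangle[OF X0, of "2 * \<delta>"] nP' \<delta> by (simp add: norm_minus_commute)
  moreover have "s * \<delta> / 6 \<le> \<bar>cross P' Q'\<bar> / (3 * (2 * \<delta>))"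
    using X \<delta> by (simp add: field_simps power2_eq_square)
  moreover have "(A + (A + P') + (A + Q')) / 3 = A + (P' + Q') / 3"
    by (simp add: complex_eq_iff)
  ultimately have ball: "ball (A + (P' + Q') / 3) (s * \<delta> / 6) \<subseteq> convex hull {A, A + P', A + Q'}"
    by (metis subset_ball order_trans)
  have "A + P' \<in> closed_segment A (A + P)" "A + Q' \<in> closed_segment A (A + Q)"
    unfolding in_segment P'_def Q'_def using \<delta> P0
    by (auto intro!: exI[of _ "\<delta> / cmod P"] exI[of _ "\<delta> / cmod Q"] simp: algebra_simps)
  moreover have "closed_segment A (A + P) \<subseteq> convex hull {A, A + P, A + Q}"
    "closed_segment A (A + Q) \<subseteq> convex hull {A, A + P, A + Q}"
    by (intro closed_segment_subset convex_convex_hull hull_inc; simp)+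
  ultimately have "convex hull {A, A + P', A + Q'} \<subseteq> convex hull {A, A + P, A + Q}"
    by (intro hull_minimal) (auto intro: hull_inc)
  moreover have "convex hull {A, A + P', A + Q'} \<subseteq> ball A (2 * \<delta>)"
    using nP' \<delta> by (intro hull_minimal) (auto simp: dist_norm)
  ultimately show ?thesis using ball by blast
qed

lemma sum_square_radii_le_if_disjoint_balls:
  fixes c :: "'i \<Rightarrow> complex"
  assumes I: "finite I" and r: "\<And>i. i \<in> I \<Longrightarrow> r i > 0"
    and disj: "\<And>i j. i \<in> I \<Longrightarrow> j \<in> I \<Longrightarrow> i \<noteq> j \<Longrightarrow> ball (c i) (r i) \<inter> ball (c j) (r j) = {}"
    and sub: "\<And>i. i \<in> I \<Longrightarrow> ball (c i) (r i) \<subseteq> ball a R"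
  shows "(\<Sum>i\<in>I. (r i)^2) \<le> R^2"
proof (cases "I = {}")
  case False
  then obtain i0 where i0: "i0 \<in> I" by auto
  have "R \<ge> 0" using sub[OF i0] r[OF i0] by (smt (verit) centre_in_ball dist_not_less_zero mem_ball subsetD)
  define k where "k = measure lborel (ball (0::complex) 1)"
  have area: "measure lborel (ball (z::complex) t) = t^2 * k" if "t \<ge> 0" for z t
    using content_ball_conv_unit_ball[OF that, of z] by (simp add: k_def)
  have "k > 0" unfolding k_def by (rule content_ball_pos) simp
  have fin: "emeasure lborel (ball (z::complex) t) \<noteq> \<infinity>" for z t
    using emeasure_bounded_finite[of "ball z t"] by simp
  have "measure lborel (\<Union>i\<in>I. ball (c i) (r i)) = (\<Sum>i\<in>I. measure lborel (ball (c i) (r i)))"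
    by (rule measure_finite_Union[OF I]) (use disj fin in \<open>auto simp: borel_open disjoint_family_on_def\<close>)
  hence "(\<Sum>i\<in>I. (r i)^2) * k = measure lborel (\<Union>i\<in>I. ball (c i) (r i))"
    using r by (simp add: area sum_distrib_right less_imp_le)
  also have "\<dots> \<le> measure lborel (ball a R)"
  proof (rule measure_mono_fmeasurable)
    show "ball a R \<in> fmeasurable lborel"
      using fin[of a R] by (intro fmeasurableI) (auto simp: borel_open top.not_eq_extremum)
  qed (use sub in \<open>auto intro!: borel_open\<close>)
  finally show ?thesis using area[OF \<open>R \<ge> 0\<close>] \<open>k > 0\<close> by simp
qed simp

lemma ball_not_subset_convex_hull_card_le_2:
  fixes S :: "complex set"
  assumes "finite S" "card S \<le> 2" "r > 0"
  shows "\<not> ball z r \<subseteq> convex hull S"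
proof
  assume sub: "ball z r \<subseteq> convex hull S"
  obtain u v where "S \<subseteq> {u, v}"
  proof -
    have "card S = 0 \<or> card S = 1 \<or> card S = 2" using assms(2) by linarith
    hence "S = {} \<or> (\<exists>u. S = {u}) \<or> (\<exists>u v. S = {u, v})"
      using assms(1) by (auto simp: card_2_iff card_1_singleton_iff)
    thus ?thesis using that by blast
  qed
  hence "convex hull S \<subseteq> closed_segment u v"
    by (intro hull_minimal) (auto simp: ends_in_segment)
  hence "ball z r \<subseteq> interior (closed_segment u v)" using sub by (simp add: interior_maximal)
  thus False using assms(3) interior_closed_segment_ge2[of u v] centre_in_ball[of z r] by auto
qed

lemma closed_Union_locally_finite:
  fixes S :: "'f \<Rightarrow> 'a::heine_borel set"
  assumes finite: "\<And>K. compact K \<Longrightarrow> finite {f \<in> G. S f \<inter> K \<noteq> {}}"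
    and closed: "\<And>f. f \<in> G \<Longrightarrow> closed (S f)"
  shows "closed (\<Union>f\<in>G. S f)"
  unfolding closed_sequential_limits
proof (intro allI impI, elim conjE)
  fix x l assume xs: "\<forall>n. x n \<in> (\<Union>f\<in>G. S f)" and lim: "x \<longlonglongrightarrow> l"
  define G' where "G' = {f \<in> G. S f \<inter> cball l 1 \<noteq> {}}"
  have closed': "closed (\<Union>f\<in>G'. S f)"
    using finite[of "cball l 1"] closed by (intro closed_UN) (auto simp: G'_def)
  have "eventually (\<lambda>n. x n \<in> ball l 1) sequentially"
    using lim by (intro tendstoD[of x l sequentially 1, unfolded dist_commute[of _ l], folded mem_ball]) auto
  hence "eventually (\<lambda>n. x n \<in> (\<Union>f\<in>G'. S f)) sequentially"
  proof (rule eventually_mono)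
    fix n assume "x n \<in> ball l 1"
    moreover obtain f where "f \<in> G" "x n \<in> S f" using xs by auto
    ultimately show "x n \<in> (\<Union>f\<in>G'. S f)" unfolding G'_def by force
  qed
  hence "l \<in> (\<Union>f\<in>G'. S f)" using Lim_in_closed_set[OF closed' _ _ lim] by simp
  thus "l \<in> (\<Union>f\<in>G. S f)" unfolding G'_def by auto
qed

section \<open>The cotangent energy of a face\<close>

text \<open>On a triangle \<open>ijk\<close> this is \<open>1/2 \<Sum> cot \<theta>\<^sup>k\<^sub>i\<^sub>j (x\<^sub>i - x\<^sub>j) (y\<^sub>i - y\<^sub>j)\<close> over its three edges;
  the factor \<open>1/4\<close> compensates for counting every edge in both orientations.\<close>

definition face_energy :: "('v \<Rightarrow> complex) \<Rightarrow> 'v set \<Rightarrow> ('v \<Rightarrow> real) \<Rightarrow> ('v \<Rightarrow> real) \<Rightarrow> real" where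
  "face_energy p f x y =
     (1/4) * (\<Sum>k\<in>f. \<Sum>i\<in>f - {k}. \<Sum>j\<in>f - {k}. cot (theta p k i j) * (x i - x j) * (y i - y j))"

lemma theta_commute: "theta p k i j = theta p k j i"
  unfolding theta_def by (rule inner_angle_commute)

lemma face_energy_triangle:
  assumes "a \<noteq> b" "b \<noteq> c" "a \<noteq> c"
  shows "face_energy p {a, b, c} x y = (1/2) * (cot (theta p a b c) * (x b - x c) * (y b - y c)
      + cot (theta p b a c) * (x a - x c) * (y a - y c) + cot (theta p c a b) * (x a - x b) * (y a - y b))"
  unfolding face_energy_def using assms
  by (simp add: insert_Diff_if theta_commute[of p _ c b] theta_commute[of p _ c a] theta_commute[of p _ b a]
      algebra_simps)

lemma face_energy_add_scaled:
  "face_energy p f x (\<lambda>i. \<alpha> * y i + z i) = \<alpha> * face_energy p f x y + face_energy p f x z"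
proof -
  have "cot (theta p k i j) * (x i - x j) * ((\<alpha> * y i + z i) - (\<alpha> * y j + z j))
      = \<alpha> * (cot (theta p k i j) * (x i - x j) * (y i - y j)) + cot (theta p k i j) * (x i - x j) * (z i - z j)"
    for k i j by (simp add: algebra_simps)
  hence "(\<Sum>k\<in>f. \<Sum>i\<in>f - {k}. \<Sum>j\<in>f - {k}. cot (theta p k i j) * (x i - x j) * ((\<alpha> * y i + z i) - (\<alpha> * y j + z j)))
      = \<alpha> * (\<Sum>k\<in>f. \<Sum>i\<in>f - {k}. \<Sum>j\<in>f - {k}. cot (theta p k i j) * (x i - x j) * (y i - y j))
        + (\<Sum>k\<in>f. \<Sum>i\<in>f - {k}. \<Sum>j\<in>f - {k}. cot (theta p k i j) * (x i - x j) * (z i - z j))"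
    by (simp add: sum.distrib sum_distrib_left)
  thus ?thesis unfolding face_energy_def by (simp add: algebra_simps)
qed

text \<open>\<open>cross (p a - p c) (p b - p c)\<close> times the gradient of the affine interpolant of \<open>x\<close> on the
  triangle \<open>abc\<close>, rotated by a right angle.\<close>

definition face_grad :: "('v \<Rightarrow> complex) \<Rightarrow> 'v \<Rightarrow> 'v \<Rightarrow> 'v \<Rightarrow> ('v \<Rightarrow> real) \<Rightarrow> complex" where
  "face_grad p a b c x = (x a - x c) *\<^sub>R (p b - p c) - (x b - x c) *\<^sub>R (p a - p c)"

lemma face_energy_triangle_eq_inner:
  assumes d: "a \<noteq> b" "b \<noteq> c" "a \<noteq> c" and X: "cross (p a - p c) (p b - p c) \<noteq> 0"
  shows "face_energy p {a, b, c} x y =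
           (face_grad p a b c x \<bullet> face_grad p a b c y) / (2 * \<bar>cross (p a - p c) (p b - p c)\<bar>)"
proof -
  define P where "P = p a - p c"
  define Q where "Q = p b - p c"
  define n where "n = \<bar>cross P Q\<bar>"
  have "n > 0" using X by (simp add: n_def P_def Q_def)
  have Xa: "cross (p b - p a) (p c - p a) \<noteq> 0" "\<bar>cross (p b - p a) (p c - p a)\<bar> = n"
    using cross_triangle_permute[of "p c" "p a" "p b"] X by (simp_all add: n_def P_def Q_def)
  have Xb: "cross (p a - p b) (p c - p b) \<noteq> 0" "\<bar>cross (p a - p b) (p c - p b)\<bar> = n"
    using cross_triangle_permute[of "p c" "p a" "p b"] X by (simp_all add: n_def P_def Q_def)
  have ca: "cot (theta p a b c) = ((Q - P) \<bullet> (- P)) / n"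
    using inner_angle_trig(3)[OF Xa(1)] Xa(2) unfolding theta_def by (simp add: P_def Q_def)
  have cb: "cot (theta p b a c) = ((P - Q) \<bullet> (- Q)) / n"
    using inner_angle_trig(3)[OF Xb(1)] Xb(2) unfolding theta_def by (simp add: P_def Q_def)
  have cc: "cot (theta p c a b) = (P \<bullet> Q) / n"
    using inner_angle_trig(3)[OF X] unfolding theta_def by (simp add: P_def Q_def n_def)
  have "face_energy p {a, b, c} x y
      = (((x a - x c) *\<^sub>R Q - (x b - x c) *\<^sub>R P) \<bullet> ((y a - y c) *\<^sub>R Q - (y b - y c) *\<^sub>R P)) / (2 * n)"
    unfolding face_energy_triangle[OF d] ca cb cc using \<open>n > 0\<close>
    by (simp add: field_simps inner_diff_left inner_diff_right inner_commute[of Q P])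
      (simp add: algebra_simps inner_commute[of Q P])
  thus ?thesis by (simp add: face_grad_def P_def Q_def n_def)
qed

lemma face_grad_eq_0_imp:
  assumes "cross (p a - p c) (p b - p c) \<noteq> 0" "face_grad p a b c x = 0"
  shows "x a = x c" "x b = x c"
proof -
  have "cross (p a - p c) (face_grad p a b c x) = (x a - x c) * cross (p a - p c) (p b - p c)"
    "cross (p b - p c) (face_grad p a b c x) = (x b - x c) * cross (p a - p c) (p b - p c)"
    unfolding face_grad_def cross_def by (simp_all add: algebra_simps)
  thus "x a = x c" "x b = x c" using assms by (simp_all add: cross_def)
qed

text \<open>The six orientations of a face carry its share of \<open>\<Sum>\<^sub>i w\<^sub>i (\<Delta>u)\<^sub>i\<close>.\<close>

lemma sum_orientations_eq_neg_face_energy: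
  assumes "a \<noteq> b" "b \<noteq> c" "a \<noteq> c"
  shows "(\<Sum>(i, j, k)\<in>{(a, b, c), (a, c, b), (b, a, c), (b, c, a), (c, a, b), (c, b, a)}.
            w i * ((1/2) * cot (theta p k i j) * (u j - u i))) = - face_energy p {a, b, c} u w"
  unfolding face_energy_triangle[OF assms] using assms
  by (simp add: theta_commute[of p _ c b] theta_commute[of p _ c a] theta_commute[of p _ b a])
    (simp add: field_simps; algebra)

lemma ordered_triples_of_triangle:
  assumes "a \<noteq> b" "b \<noteq> c" "a \<noteq> c"
  shows "{(i, j, k). {i, j, k} = {a, b, c} \<and> i \<noteq> j \<and> j \<noteq> k \<and> i \<noteq> k}
           = {(a, b, c), (a, c, b), (b, a, c), (b, c, a), (c, a, b), (c, b, a)}"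
proof (intro equalityI subsetI)
  fix t assume "t \<in> {(i, j, k). {i, j, k} = {a, b, c} \<and> i \<noteq> j \<and> j \<noteq> k \<and> i \<noteq> k}"
  then obtain i j k where t: "t = (i, j, k)" "{i, j, k} = {a, b, c}" "i \<noteq> j" "j \<noteq> k" "i \<noteq> k" by blast
  hence "i \<in> {a, b, c}" "j \<in> {a, b, c}" "k \<in> {a, b, c}" by auto
  thus "t \<in> {(a, b, c), (a, c, b), (b, a, c), (b, c, a), (c, a, b), (c, b, a)}" using t(1,3-5) by auto
qed (use assms in \<open>auto simp: insert_commute\<close>)

definition osc :: "('v \<Rightarrow> real) \<Rightarrow> 'v set \<Rightarrow> real" where
  "osc h f = Max ((\<lambda>(i, j). \<bar>h i - h j\<bar>) ` (f \<times> f))"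

lemma osc_ge: "finite f \<Longrightarrow> i \<in> f \<Longrightarrow> j \<in> f \<Longrightarrow> \<bar>h i - h j\<bar> \<le> osc h f"
  unfolding osc_def by (rule Max_ge) force+

lemma osc_nonneg: "finite f \<Longrightarrow> f \<noteq> {} \<Longrightarrow> 0 \<le> osc h f"
  using osc_ge[of f _ _ h] by fastforce

lemma osc_le: "finite f \<Longrightarrow> f \<noteq> {} \<Longrightarrow> (\<And>i j. i \<in> f \<Longrightarrow> j \<in> f \<Longrightarrow> \<bar>h i - h j\<bar> \<le> B) \<Longrightarrow> osc h f \<le> B"
  unfolding osc_def by (rule Max.boundedI) auto

definition diam_verts :: "('v \<Rightarrow> complex) \<Rightarrow> 'v set \<Rightarrow> real" where
  "diam_verts p f = Max ((\<lambda>(i, j). cmod (p i - p j)) ` (f \<times> f))"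

lemma diam_verts_ge: "finite f \<Longrightarrow> i \<in> f \<Longrightarrow> j \<in> f \<Longrightarrow> cmod (p i - p j) \<le> diam_verts p f"
  unfolding diam_verts_def by (rule Max_ge) force+

lemma diam_verts_le:
  "finite f \<Longrightarrow> f \<noteq> {} \<Longrightarrow> (\<And>i j. i \<in> f \<Longrightarrow> j \<in> f \<Longrightarrow> cmod (p i - p j) \<le> B) \<Longrightarrow> diam_verts p f \<le> B"
  unfolding diam_verts_def by (rule Max.boundedI) auto

lemma diam_verts_triangle:
  "diam_verts p {a, b, c} = max (cmod (p b - p a)) (max (cmod (p c - p b)) (cmod (p a - p c)))"
proof (rule antisym)
  show "diam_verts p {a, b, c} \<le> max (cmod (p b - p a)) (max (cmod (p c - p b)) (cmod (p a - p c)))"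
    by (rule diam_verts_le) (auto simp: norm_minus_commute le_max_iff_disj)
  show "max (cmod (p b - p a)) (max (cmod (p c - p b)) (cmod (p a - p c))) \<le> diam_verts p {a, b, c}"
    using diam_verts_ge[of "{a,b,c}" b a p] diam_verts_ge[of "{a,b,c}" c b p] diam_verts_ge[of "{a,b,c}" a c p]
    by simp
qed

lemma absorb_cross_term:
  fixes a k m d t :: real
  assumes "0 \<le> a" "a \<le> k" "0 \<le> m" "0 \<le> d" "\<bar>t\<bar> \<le> a * (k * (d * (2 * m + d)))"
  shows "m^2 / 2 * a^2 - 3 * k^2 * d^2 \<le> m^2 * a^2 + t"
proof -
  have "a * (k * (d * (2 * m + d))) = 2 * (m * a) * (k * d) + a * (k * d^2)"
    by (simp add: algebra_simps power2_eq_square)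
  also have "\<dots> \<le> (1/2 * (m * a)^2 + 2 * (k * d)^2) + k * (k * d^2)"
  proof (intro add_mono)
    show "2 * (m * a) * (k * d) \<le> 1/2 * (m * a)^2 + 2 * (k * d)^2"
      using sum_squares_ge_zero[of "m * a / 2 - k * d" 0] by (simp add: power2_eq_square algebra_simps)
    show "a * (k * d^2) \<le> k * (k * d^2)"
      using assms by (intro mult_right_mono) auto
  qed
  finally have "\<bar>t\<bar> \<le> 1/2 * m^2 * a^2 + 3 * k^2 * d^2"
    using assms(5) by (simp add: power_mult_distrib algebra_simps power2_eq_square)
  thus ?thesis by linarith
qed

section \<open>Triangulations with angles bounded below\<close>

locale fat_triangulation =
  fixes V :: "'v set" and F :: "'v set set" and p :: "'v \<Rightarrow> complex" and e :: real
  assumes surf: "tri_surface V F" and geo: "geodesic_homeo V F p"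
    and e: "0 < e" "e \<le> pi/2"
    and angle_ge: "\<And>i j k. {i, j, k} \<in> F \<Longrightarrow> card {i, j, k} = 3 \<Longrightarrow> e \<le> theta p i j k"
begin

lemma sin_e: "0 < sin e" "sin e \<le> 1"
  using e by (auto intro: sin_gt_zero)

lemma face_subset: "f \<in> F \<Longrightarrow> f \<subseteq> V"
  using surf unfolding tri_surface_def by blast

lemma card_face: "f \<in> F \<Longrightarrow> card f = 3"
  using surf unfolding tri_surface_def by blast

lemma face_finite: "f \<in> F \<Longrightarrow> finite f"
  using card_face by (metis card.infinite zero_neq_numeral)

lemma face_nonempty: "f \<in> F \<Longrightarrow> f \<noteq> {}"
  using card_face by fastforce

lemma vertex_in_face: "v \<in> V \<Longrightarrow> \<exists>f\<in>F. v \<in> f"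
  using surf unfolding tri_surface_def by blast

lemma finite_faces_at: "v \<in> V \<Longrightarrow> finite {f \<in> F. v \<in> f}"
  using surf unfolding tri_surface_def by blast

lemma finite_faces_meeting: "finite W \<Longrightarrow> W \<subseteq> V \<Longrightarrow> finite {f \<in> F. f \<inter> W \<noteq> {}}"
proof -
  assume "finite W" "W \<subseteq> V"
  moreover have "{f \<in> F. f \<inter> W \<noteq> {}} \<subseteq> (\<Union>i\<in>W. {f \<in> F. i \<in> f})" by auto
  ultimately show ?thesis using finite_faces_at by (meson finite_UN_I finite_subset subsetD)
qed

lemma face_vertices:
  assumes "f \<in> F" obtains a b c where "f = {a, b, c}" "a \<noteq> b" "b \<noteq> c" "a \<noteq> c"
  using card_face[OF assms] card_3_iff by metis

lemma face_vertices_at: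
  assumes "f \<in> F" "v \<in> f" obtains j k where "f = {v, j, k}" "v \<noteq> j" "j \<noteq> k" "v \<noteq> k"
proof -
  obtain a b c where "f = {a, b, c}" "a \<noteq> b" "b \<noteq> c" "a \<noteq> c" using face_vertices[OF assms(1)] .
  thus ?thesis using assms(2) that by (auto simp: insert_commute)
qed

lemma face_cross_nonzero:
  assumes "{a, b, c} \<in> F" "a \<noteq> b" "b \<noteq> c" "a \<noteq> c"
  shows "cross (p b - p a) (p c - p a) \<noteq> 0"
proof -
  have "\<not> collinear (p ` {a, b, c})" using geo assms(1) unfolding geodesic_homeo_def by blast
  thus ?thesis by (intro cross_nonzero_if_not_collinear) simp
qed

lemma face_cross_ge_diam:
  assumes f: "{a, b, c} \<in> F" "a \<noteq> b" "b \<noteq> c" "a \<noteq> c"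
  shows "sin e * (diam_verts p {a, b, c})^2 / 2 \<le> \<bar>cross (p b - p a) (p c - p a)\<bar>"
proof -
  have "{b, c, a} \<in> F" "{c, a, b} \<in> F" using f(1) by (simp_all add: insert_commute)
  hence "e \<le> theta p a b c" "e \<le> theta p b c a" "e \<le> theta p c a b"
    using angle_ge f by auto
  thus ?thesis unfolding diam_verts_triangle
    using abs_cross_ge_sin_diam[OF face_cross_nonzero[OF f] e] by (simp add: theta_def)
qed

lemma face_diam_pos: assumes "f \<in> F" shows "0 < diam_verts p f"
proof -
  obtain a b c where f: "f = {a, b, c}" "a \<noteq> b" "b \<noteq> c" "a \<noteq> c" using face_vertices[OF assms] .
  hence "cross (p b - p a) (p c - p a) \<noteq> 0" using face_cross_nonzero assms by simp
  hence "p b \<noteq> p a" by (auto simp: cross_def)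
  hence "0 < cmod (p b - p a)" by simp
  also have "\<dots> \<le> diam_verts p f" using f by (intro diam_verts_ge) auto
  finally show ?thesis .
qed

lemma face_side_ge_diam:
  assumes f: "f \<in> F" "i \<in> f" "j \<in> f" "i \<noteq> j"
  shows "sin e * diam_verts p f / 2 \<le> cmod (p j - p i)"
proof -
  obtain k where k: "f = {i, j, k}" "k \<noteq> i" "k \<noteq> j"
  proof -
    obtain a b c where "f = {a, b, c}" "a \<noteq> b" "b \<noteq> c" "a \<noteq> c" using face_vertices[OF f(1)] .
    thus ?thesis using f(2-4) that by (auto simp: insert_commute)
  qed
  have "sin e * (diam_verts p f)^2 / 2 \<le> \<bar>cross (p j - p i) (p k - p i)\<bar>"
    using face_cross_ge_diam[of i j k] f k by auto
  also have "\<dots> \<le> cmod (p j - p i) * cmod (p k - p i)" by (rule abs_cross_le)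
  also have "\<dots> \<le> cmod (p j - p i) * diam_verts p f"
    using diam_verts_ge[OF face_finite[OF f(1)], of k i p] k f by (intro mult_left_mono) auto
  finally show ?thesis using face_diam_pos[OF f(1)] by (simp add: power2_eq_square field_simps)
qed

lemma face_energy_eq_inner:
  assumes "f \<in> F"
  obtains a b c where "f = {a, b, c}" "cross (p a - p c) (p b - p c) \<noteq> 0"
    "\<And>x y. face_energy p f x y =
       (face_grad p a b c x \<bullet> face_grad p a b c y) / (2 * \<bar>cross (p a - p c) (p b - p c)\<bar>)"
proof -
  obtain a b c where abc: "f = {a, b, c}" "a \<noteq> b" "b \<noteq> c" "a \<noteq> c" using face_vertices[OF assms] .
  moreover have "cross (p a - p c) (p b - p c) = cross (p b - p a) (p c - p a)"
    by (rule cross_triangle_permute(4))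
  ultimately have "cross (p a - p c) (p b - p c) \<noteq> 0"
    using face_cross_nonzero[of a b c] assms by simp
  thus ?thesis using that abc face_energy_triangle_eq_inner[OF abc(2-4)] by blast
qed

lemma face_energy_nonneg: "f \<in> F \<Longrightarrow> 0 \<le> face_energy p f x x"
  by (elim face_energy_eq_inner) simp

lemma face_energy_cauchy_schwarz:
  assumes "f \<in> F"
  shows "\<bar>face_energy p f x y\<bar> \<le> sqrt (face_energy p f x x) * sqrt (face_energy p f y y)"
proof -
  obtain a b c where abc: "f = {a, b, c}" "cross (p a - p c) (p b - p c) \<noteq> 0"
    and E: "\<And>x y. face_energy p f x y =
       (face_grad p a b c x \<bullet> face_grad p a b c y) / (2 * \<bar>cross (p a - p c) (p b - p c)\<bar>)"
    using face_energy_eq_inner[OF assms] by blast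
  define n where "n = 2 * \<bar>cross (p a - p c) (p b - p c)\<bar>"
  have "n > 0" using abc by (simp add: n_def)
  have "\<bar>face_energy p f x y\<bar> = \<bar>face_grad p a b c x \<bullet> face_grad p a b c y\<bar> / n"
    unfolding E n_def[symmetric] using \<open>n > 0\<close> by (simp add: abs_div)
  also have "\<dots> \<le> norm (face_grad p a b c x) * norm (face_grad p a b c y) / n"
    using \<open>n > 0\<close> by (intro divide_right_mono Cauchy_Schwarz_ineq2) auto
  also have "\<dots> = sqrt (face_energy p f x x) * sqrt (face_energy p f y y)"
    unfolding E n_def[symmetric] using \<open>n > 0\<close>
    by (simp add: real_sqrt_divide real_sqrt_mult power2_norm_eq_inner[symmetric] field_simps)
  finally show ?thesis .
qed

lemma face_energy_eq_0_imp_eq: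
  assumes "f \<in> F" "face_energy p f x x = 0" "i \<in> f" "j \<in> f"
  shows "x i = x j"
proof -
  obtain a b c where abc: "f = {a, b, c}" "cross (p a - p c) (p b - p c) \<noteq> 0"
    and E: "\<And>x y. face_energy p f x y =
       (face_grad p a b c x \<bullet> face_grad p a b c y) / (2 * \<bar>cross (p a - p c) (p b - p c)\<bar>)"
    using face_energy_eq_inner[OF assms(1)] by blast
  have "face_grad p a b c x = 0" using assms(2) abc(2) unfolding E by simp
  thus ?thesis using face_grad_eq_0_imp[of p a c b x, OF abc(2)] abc(1) assms(3,4) by auto
qed

text \<open>The bound does not depend on the size of the face; this is where fatness enters.\<close>

lemma face_energy_le:
  assumes f: "f \<in> F" and x: "\<And>i. i \<in> f \<Longrightarrow> \<bar>x i\<bar> \<le> A"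
  shows "face_energy p f x x \<le> 16 / sin e * A^2"
proof -
  obtain a b c where abc: "f = {a, b, c}" "cross (p a - p c) (p b - p c) \<noteq> 0"
    and E: "\<And>x y. face_energy p f x y =
       (face_grad p a b c x \<bullet> face_grad p a b c y) / (2 * \<bar>cross (p a - p c) (p b - p c)\<bar>)"
    using face_energy_eq_inner[OF f] by blast
  define D where "D = diam_verts p f"
  have "D > 0" using face_diam_pos[OF f] by (simp add: D_def)
  have "a \<noteq> b" "b \<noteq> c" "a \<noteq> c" using abc(1) card_face[OF f] by (auto simp: card_insert_if split: if_splits)
  have D: "cmod (p a - p c) \<le> D" "cmod (p b - p c) \<le> D"
    using diam_verts_ge[OF face_finite[OF f]] abc(1) by (auto simp: D_def)
  have "\<bar>x a\<bar> \<le> A" "\<bar>x b\<bar> \<le> A" "\<bar>x c\<bar> \<le> A" using x abc(1) by auto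
  hence dx: "\<bar>x a - x c\<bar> \<le> 2 * A" "\<bar>x b - x c\<bar> \<le> 2 * A" by (auto simp: abs_le_iff)
  have "norm (face_grad p a b c x) \<le> \<bar>x a - x c\<bar> * cmod (p b - p c) + \<bar>x b - x c\<bar> * cmod (p a - p c)"
    unfolding face_grad_def by (metis norm_scaleR norm_triangle_ineq4 real_norm_def)
  also have "\<dots> \<le> 2 * A * D + 2 * A * D" using dx D by (intro add_mono mult_mono) auto
  finally have "norm (face_grad p a b c x) \<le> 2 * A * D + 2 * A * D" .
  hence grad: "(norm (face_grad p a b c x))^2 \<le> (4 * A * D)^2" by (intro power_mono) auto
  have fat: "sin e * D^2 / 2 \<le> \<bar>cross (p a - p c) (p b - p c)\<bar>"
    using face_cross_ge_diam[of a b c] f abc \<open>a \<noteq> b\<close> \<open>b \<noteq> c\<close> \<open>a \<noteq> c\<close>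
      cross_triangle_permute(4) by (metis D_def)
  have "face_energy p f x x = (norm (face_grad p a b c x))^2 / (2 * \<bar>cross (p a - p c) (p b - p c)\<bar>)"
    unfolding E by (simp add: power2_norm_eq_inner)
  also have "\<dots> \<le> (4 * A * D)^2 / (sin e * D^2)"
    using grad fat sin_e \<open>D > 0\<close> abc(2) by (intro frac_le) auto
  also have "\<dots> = 16 / sin e * A^2" using \<open>D > 0\<close> sin_e by (simp add: field_simps power2_eq_square)
  finally show ?thesis .
qed

lemma sqrt_face_energy_le:
  assumes f: "f \<in> F" and x: "\<And>i. i \<in> f \<Longrightarrow> \<bar>x i\<bar> \<le> A"
  shows "sqrt (face_energy p f x x) \<le> sqrt (16 / sin e) * A"
proof -
  have "0 \<le> A" using x face_nonempty[OF f] by (meson abs_ge_zero equals0I order_trans)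
  have "sqrt (face_energy p f x x) \<le> sqrt (16 / sin e * A^2)"
    using face_energy_le[OF f x] by (rule real_sqrt_le_mono)
  also have "\<dots> = sqrt (16 / sin e) * A" using \<open>0 \<le> A\<close> by (simp only: real_sqrt_mult real_sqrt_abs abs_of_nonneg)
  finally show ?thesis .
qed

section \<open>The Laplacian and a Caccioppoli inequality\<close>

definition laplacian :: "('v \<Rightarrow> real) \<Rightarrow> 'v \<Rightarrow> real" where
  "laplacian u i = (\<Sum>j\<in>nbrs F i. cot_weight F p i j * (u j - u i))"

lemma nbrs_iff: "j \<in> nbrs F i \<longleftrightarrow> i \<noteq> j \<and> (\<exists>f\<in>F. i \<in> f \<and> j \<in> f)"
  unfolding nbrs_def tri_edges_def by (auto simp: card_2_iff)

lemma finite_nbrs: "v \<in> V \<Longrightarrow> finite (nbrs F v)"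
proof -
  assume "v \<in> V"
  hence "finite (\<Union>{f \<in> F. v \<in> f})" using finite_faces_at face_finite by auto
  moreover have "nbrs F v \<subseteq> \<Union>{f \<in> F. v \<in> f}" by (auto simp: nbrs_iff)
  ultimately show ?thesis by (rule finite_subset[rotated])
qed

lemma sum_laplacian_eq_neg_face_energy:
  assumes W: "finite W" "W \<subseteq> V" and w0: "\<And>i. i \<notin> W \<Longrightarrow> w i = 0"
  shows "(\<Sum>i\<in>W. w i * laplacian u i) = - (\<Sum>f\<in>{f \<in> F. f \<inter> W \<noteq> {}}. face_energy p f u w)"
proof -
  define K where "K = (\<lambda>i j. {k. {i, j, k} \<in> F \<and> k \<noteq> i \<and> k \<noteq> j})"
  define T where "T = {(i, j, k). i \<in> W \<and> {i, j, k} \<in> F \<and> i \<noteq> j \<and> j \<noteq> k \<and> i \<noteq> k}"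
  define \<phi> where "\<phi> = (\<lambda>(i, j, k). w i * ((1/2) * cot (theta p k i j) * (u j - u i)))"
  define face where "face = (\<lambda>(i::'v, j::'v, k::'v). {i, j, k})"
  define FW where "FW = {f \<in> F. f \<inter> W \<noteq> {}}"
  have finN: "finite (nbrs F i)" if "i \<in> W" for i using finite_nbrs that W by blast
  have finK: "finite (K i j)" if "i \<in> W" for i j
  proof -
    have "finite (\<Union>{f \<in> F. i \<in> f})" using finite_faces_at face_finite that W by auto
    moreover have "K i j \<subseteq> \<Union>{f \<in> F. i \<in> f}" unfolding K_def by auto
    ultimately show ?thesis by (rule finite_subset[rotated])
  qed
  have TS: "T = Sigma W (\<lambda>i. Sigma (nbrs F i) (K i))"
  proof (rule set_eqI)
    fix t :: "'v \<times> 'v \<times> 'v"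
    obtain i j k where t: "t = (i, j, k)" by (cases t) auto
    show "t \<in> T \<longleftrightarrow> t \<in> Sigma W (\<lambda>i. Sigma (nbrs F i) (K i))"
      unfolding t T_def K_def by (auto simp: nbrs_iff)
  qed
  have finT: "finite T" unfolding TS using W finN finK by (intro finite_SigmaI) auto
  have "face ` T \<subseteq> FW" unfolding face_def T_def FW_def by auto
  hence group: "(\<Sum>t\<in>T. \<phi> t) = (\<Sum>f\<in>FW. \<Sum>t\<in>{t \<in> T. face t = f}. \<phi> t)"
    using sum.group[OF finT finite_faces_meeting[OF W, folded FW_def], of face \<phi>] by simp
  have "(\<Sum>i\<in>W. w i * laplacian u i) = (\<Sum>i\<in>W. \<Sum>j\<in>nbrs F i. \<Sum>k\<in>K i j. \<phi> (i, j, k))"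
    unfolding laplacian_def cot_weight_def \<phi>_def K_def
    by (simp add: sum_distrib_left sum_distrib_right mult.assoc)
  also have "\<dots> = (\<Sum>t\<in>T. \<phi> t)"
    unfolding TS by (simp add: sum.Sigma W finN finK)
  also have "\<dots> = (\<Sum>f\<in>FW. - face_energy p f u w)"
    unfolding group
  proof (rule sum.cong[OF refl])
    fix f assume f: "f \<in> FW"
    obtain a b c where abc: "f = {a, b, c}" "a \<noteq> b" "b \<noteq> c" "a \<noteq> c"
      using f face_vertices unfolding FW_def by blast
    define P6 where "P6 = {(a, b, c), (a, c, b), (b, a, c), (b, c, a), (c, a, b), (c, b, a)}"
    have "P6 = {(i, j, k). {i, j, k} = f \<and> i \<noteq> j \<and> j \<noteq> k \<and> i \<noteq> k}"
      unfolding P6_def abc(1) by (rule ordered_triples_of_triangle[OF abc(2-4), symmetric])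
    hence "{t \<in> T. face t = f} = {t \<in> P6. fst t \<in> W}"
      using f unfolding T_def face_def FW_def by auto
    moreover have "\<phi> t = 0" if "t \<in> P6" "fst t \<notin> W" for t
      using that w0 unfolding \<phi>_def by (auto split: prod.splits)
    ultimately have "(\<Sum>t\<in>{t \<in> T. face t = f}. \<phi> t) = (\<Sum>t\<in>P6. \<phi> t)"
      by (intro sum.mono_neutral_left) (auto simp: P6_def)
    also have "\<dots> = - face_energy p f u w"
      unfolding P6_def \<phi>_def abc(1) by (rule sum_orientations_eq_neg_face_energy[OF abc(2-4)])
    finally show "(\<Sum>t\<in>{t \<in> T. face t = f}. \<phi> t) = - face_energy p f u w" .
  qed
  finally show ?thesis by (simp add: FW_def sum_negf)
qed

text \<open>The cutoff is frozen at its minimum \<open>m\<close> on the face; the error \<open>\<eta>\<^sup>2 - m\<^sup>2\<close> is controlled by its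
  oscillation and absorbed by \<open>absorb_cross_term\<close>.\<close>

lemma face_energy_cutoff_ge:
  assumes f: "f \<in> F" and \<eta>: "\<And>i. i \<in> f \<Longrightarrow> 0 \<le> \<eta> i \<and> \<eta> i \<le> 1" and M: "\<And>i. i \<in> f \<Longrightarrow> \<bar>u i\<bar> \<le> M"
  shows "(Min (\<eta> ` f))^2 / 2 * face_energy p f u u - 3 * (16 / sin e) * M^2 * (osc \<eta> f)^2
          \<le> face_energy p f u (\<lambda>i. (\<eta> i)^2 * u i)"
proof -
  define m where "m = Min (\<eta> ` f)"
  define d where "d = osc \<eta> f"
  define k where "k = sqrt (16 / sin e) * M"
  define z where "z = (\<lambda>i. ((\<eta> i)^2 - m^2) * u i)"
  have fin: "finite f" and ne: "f \<noteq> {}" using face_finite[OF f] face_nonempty[OF f] by auto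
  have "m \<in> \<eta> ` f" unfolding m_def using fin ne by (intro Min_in) auto
  hence m0: "0 \<le> m" using \<eta> by auto
  have d0: "0 \<le> d" unfolding d_def by (rule osc_nonneg[OF fin ne])
  have \<eta>m: "m \<le> \<eta> i" "\<eta> i \<le> m + d" if "i \<in> f" for i
    using that \<open>m \<in> \<eta> ` f\<close> osc_ge[OF fin that, of _ \<eta>] fin by (auto simp: m_def d_def) force
  have "\<bar>z i\<bar> \<le> M * (d * (2 * m + d))" if "i \<in> f" for i
  proof -
    have "(\<eta> i)^2 \<le> (m + d)^2" "m^2 \<le> (\<eta> i)^2" using \<eta>m[OF that] m0 by (intro power_mono; simp)+
    hence "\<bar>(\<eta> i)^2 - m^2\<bar> \<le> d * (2 * m + d)" by (simp add: power2_eq_square algebra_simps)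
    thus ?thesis unfolding z_def abs_mult using M[OF that] by (simp add: mult.commute mult_mono)
  qed
  hence "sqrt (face_energy p f z z) \<le> sqrt (16 / sin e) * (M * (d * (2 * m + d)))"
    by (rule sqrt_face_energy_le[OF f])
  hence "sqrt (face_energy p f z z) \<le> k * (d * (2 * m + d))" by (simp only: k_def mult.assoc)
  hence "sqrt (face_energy p f u u) * sqrt (face_energy p f z z)
      \<le> sqrt (face_energy p f u u) * (k * (d * (2 * m + d)))"
    by (rule mult_left_mono) (simp add: face_energy_nonneg[OF f])
  hence "\<bar>face_energy p f u z\<bar> \<le> sqrt (face_energy p f u u) * (k * (d * (2 * m + d)))"
    using face_energy_cauchy_schwarz[OF f, of u z] by linarith
  moreover have "sqrt (face_energy p f u u) \<le> k" using sqrt_face_energy_le[OF f M] by (simp add: k_def)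
  ultimately have "m^2 / 2 * (sqrt (face_energy p f u u))^2 - 3 * k^2 * d^2
      \<le> m^2 * (sqrt (face_energy p f u u))^2 + face_energy p f u z"
    using m0 d0 face_energy_nonneg[OF f, of u] by (intro absorb_cross_term) auto
  moreover have "face_energy p f u (\<lambda>i. (\<eta> i)^2 * u i) = m^2 * face_energy p f u u + face_energy p f u z"
    using face_energy_add_scaled[of p f u "m^2" u z] by (simp add: z_def algebra_simps)
  moreover have "k^2 = 16 / sin e * M^2" using sin_e by (simp add: k_def power_mult_distrib)
  ultimately show ?thesis using face_energy_nonneg[OF f, of u] by (simp add: m_def d_def)
qed

text \<open>Testing \<open>\<Delta>u = 0\<close> against \<open>\<eta>\<^sup>2u\<close> and summing the face estimates.\<close>

lemma caccioppoli:
  assumes W: "finite W" "W \<subseteq> V" and \<eta>0: "\<And>i. i \<notin> W \<Longrightarrow> \<eta> i = 0"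
    and \<eta>: "\<And>i. i \<in> V \<Longrightarrow> 0 \<le> \<eta> i \<and> \<eta> i \<le> 1"
    and harmonic: "\<And>i. i \<in> V \<Longrightarrow> laplacian u i = 0" and M: "\<And>i. i \<in> V \<Longrightarrow> \<bar>u i\<bar> \<le> M"
    and f0: "f0 \<in> F" "\<And>i. i \<in> f0 \<Longrightarrow> \<eta> i = 1"
  shows "face_energy p f0 u u \<le> 6 * (16 / sin e) * M^2 * (\<Sum>f\<in>{f \<in> F. f \<inter> W \<noteq> {}}. (osc \<eta> f)^2)"
proof -
  define FW where "FW = {f \<in> F. f \<inter> W \<noteq> {}}"
  define w where "w = (\<lambda>i. (\<eta> i)^2 * u i)"
  define C where "C = 3 * (16 / sin e) * M^2"
  have "(\<Sum>i\<in>W. w i * laplacian u i) = 0" using harmonic W by (simp add: subset_eq)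
  hence sum0: "(\<Sum>f\<in>FW. face_energy p f u w) = 0"
    using sum_laplacian_eq_neg_face_energy[OF W, of w u] \<eta>0 by (simp add: FW_def w_def)
  have face: "(Min (\<eta> ` f))^2 / 2 * face_energy p f u u - C * (osc \<eta> f)^2 \<le> face_energy p f u w"
    if "f \<in> FW" for f
  proof -
    have "f \<in> F" "f \<subseteq> V" using that face_subset by (auto simp: FW_def)
    thus ?thesis unfolding w_def C_def using \<eta> M by (intro face_energy_cutoff_ge) auto
  qed
  have "(\<Sum>f\<in>FW. (Min (\<eta> ` f))^2 / 2 * face_energy p f u u - C * (osc \<eta> f)^2) \<le> 0"
    using sum_mono[of FW _ "\<lambda>f. face_energy p f u w", OF face] sum0 by simp
  hence le: "(\<Sum>f\<in>FW. (Min (\<eta> ` f))^2 / 2 * face_energy p f u u) \<le> C * (\<Sum>f\<in>FW. (osc \<eta> f)^2)"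
    by (simp add: sum_subtractf sum_distrib_left)
  obtain a where a: "a \<in> f0" using face_nonempty[OF f0(1)] by blast
  hence "f0 \<in> FW" using f0 \<eta>0 unfolding FW_def by force
  moreover have "Min (\<eta> ` f0) = 1"
    using f0 a face_finite[OF f0(1)] by (metis Min_in empty_iff finite_imageI image_iff image_is_empty)
  ultimately have "1 / 2 * face_energy p f0 u u \<le> (\<Sum>f\<in>FW. (Min (\<eta> ` f))^2 / 2 * face_energy p f u u)"
    using member_le_sum[of f0 FW "\<lambda>f. (Min (\<eta> ` f))^2 / 2 * face_energy p f u u"]
      finite_faces_meeting[OF W] face_energy_nonneg by (simp add: FW_def)
  thus ?thesis using le by (simp add: C_def FW_def)
qed

section \<open>Local geometry of the triangulation\<close>

abbreviation face_hull :: "'v set \<Rightarrow> complex set" where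
  "face_hull f \<equiv> convex hull (p ` f)"

lemma face_hull_Int: "f \<in> F \<Longrightarrow> g \<in> F \<Longrightarrow> face_hull f \<inter> face_hull g = face_hull (f \<inter> g)"
  using geo unfolding geodesic_homeo_def by blast

lemma face_hulls_cover: "\<exists>f\<in>F. z \<in> face_hull f"
  using geo unfolding geodesic_homeo_def by blast

lemma finite_faces_meeting_compact: "compact K \<Longrightarrow> finite {f \<in> F. face_hull f \<inter> K \<noteq> {}}"
  using geo unfolding geodesic_homeo_def by blast

lemma vertex_in_face_hull: "i \<in> f \<Longrightarrow> p i \<in> face_hull f"
  by (rule hull_inc) simp

lemma closed_Union_face_hulls: "closed (\<Union>f\<in>{f \<in> F. P f}. face_hull f)"
proof (rule closed_Union_locally_finite)
  show "finite {f \<in> {f \<in> F. P f}. face_hull f \<inter> K \<noteq> {}}" if "compact K" for K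
    using finite_faces_meeting_compact[OF that] by (rule finite_subset[rotated]) auto
  show "closed (face_hull f)" if "f \<in> {f \<in> F. P f}" for f
    using that face_finite by (intro compact_imp_closed finite_imp_compact_convex_hull) auto
qed

text \<open>Two distinct faces meet in a common edge or vertex, whose hull has empty interior.\<close>

lemma disjoint_balls_in_distinct_faces:
  assumes f: "f \<in> F" "g \<in> F" "f \<noteq> g" and b: "ball c1 r1 \<subseteq> face_hull f" "ball c2 r2 \<subseteq> face_hull g"
  shows "ball c1 r1 \<inter> ball c2 r2 = {}"
proof (rule ccontr)
  assume "ball c1 r1 \<inter> ball c2 r2 \<noteq> {}"
  then obtain z where z: "z \<in> ball c1 r1 \<inter> ball c2 r2" by blast
  moreover have "open (ball c1 r1 \<inter> ball c2 r2)" by (intro open_Int open_ball)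
  ultimately obtain r where r: "r > 0" "ball z r \<subseteq> ball c1 r1 \<inter> ball c2 r2"
    using open_contains_ball by blast
  hence sub: "ball z r \<subseteq> face_hull (f \<inter> g)" using b face_hull_Int[OF f(1,2)] by blast
  have "card (f \<inter> g) \<noteq> 3"
  proof
    assume "card (f \<inter> g) = 3"
    hence "f \<inter> g = f" using card_face[OF f(1)] face_finite[OF f(1)] by (metis card_subset_eq inf_le1)
    moreover have "f \<inter> g = g" using \<open>card (f \<inter> g) = 3\<close> card_face[OF f(2)] face_finite[OF f(2)]
      by (metis card_subset_eq inf_le2)
    ultimately show False using f(3) by simp
  qed
  moreover have "card (f \<inter> g) \<le> 3"
    using card_face[OF f(1)] face_finite[OF f(1)] by (metis card_mono inf_le1)
  ultimately have "card (f \<inter> g) \<le> 2" by linarith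
  hence "card (p ` (f \<inter> g)) \<le> 2" by (meson card_image_le face_finite[OF f(1)] finite_Int le_trans)
  moreover have "finite (p ` (f \<inter> g))" using face_finite[OF f(1)] by simp
  ultimately show False using ball_not_subset_convex_hull_card_le_2[OF _ _ r(1)] sub by blast
qed

definition vertex_star :: "'v \<Rightarrow> complex set" where
  "vertex_star v = (\<Union>f\<in>{f \<in> F. v \<in> f}. face_hull f)"

definition min_edge :: "'v \<Rightarrow> real" where
  "min_edge v = Min ((\<lambda>j. cmod (p j - p v)) ` nbrs F v)"

definition max_edge :: "'v \<Rightarrow> real" where
  "max_edge v = Max ((\<lambda>j. cmod (p j - p v)) ` nbrs F v)"

lemma nbrs_nonempty: assumes "v \<in> V" shows "nbrs F v \<noteq> {}"
proof -
  obtain f where f: "f \<in> F" "v \<in> f" using vertex_in_face[OF assms] by blast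
  then obtain j k where "f = {v, j, k}" "v \<noteq> j" by (rule face_vertices_at)
  hence "j \<in> nbrs F v" using f by (auto simp: nbrs_iff)
  thus ?thesis by blast
qed

lemma min_edge_le: "v \<in> V \<Longrightarrow> j \<in> nbrs F v \<Longrightarrow> min_edge v \<le> cmod (p j - p v)"
  unfolding min_edge_def using finite_nbrs by simp

lemma max_edge_ge: "v \<in> V \<Longrightarrow> j \<in> nbrs F v \<Longrightarrow> cmod (p j - p v) \<le> max_edge v"
  unfolding max_edge_def using finite_nbrs by simp

lemma min_edge_attained: assumes "v \<in> V" obtains j where "j \<in> nbrs F v" "min_edge v = cmod (p j - p v)"
proof -
  have "min_edge v \<in> (\<lambda>j. cmod (p j - p v)) ` nbrs F v"
    unfolding min_edge_def by (rule Min_in) (use finite_nbrs[OF assms] nbrs_nonempty[OF assms] in auto)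
  thus ?thesis using that by blast
qed

lemma max_edge_attained: assumes "v \<in> V" obtains j where "j \<in> nbrs F v" "max_edge v = cmod (p j - p v)"
proof -
  have "max_edge v \<in> (\<lambda>j. cmod (p j - p v)) ` nbrs F v"
    unfolding max_edge_def by (rule Max_in) (use finite_nbrs[OF assms] nbrs_nonempty[OF assms] in auto)
  thus ?thesis using that by blast
qed

lemma min_edge_pos: assumes v: "v \<in> V" shows "0 < min_edge v"
proof -
  obtain j where j: "j \<in> nbrs F v" "min_edge v = cmod (p j - p v)" using min_edge_attained[OF v] .
  then obtain f where f: "f \<in> F" "v \<in> f" "j \<in> f" "v \<noteq> j" by (auto simp: nbrs_iff)
  have "p j \<noteq> p v"
    using geo f face_subset[OF f(1)] unfolding geodesic_homeo_def by (metis inj_onD subsetD)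
  thus ?thesis using j by simp
qed

lemma dist_opposite_side_ge:
  assumes f: "f \<in> F" "v \<in> f" and v: "v \<in> V" and y: "y \<in> face_hull (f - {v})"
  shows "sin e / 2 * min_edge v \<le> cmod (y - p v)"
proof -
  obtain j k where jk: "f = {v, j, k}" "v \<noteq> j" "j \<noteq> k" "v \<noteq> k" using face_vertices_at[OF f] .
  have "f - {v} = {j, k}" using jk by auto
  hence "y \<in> closed_segment (p j) (p k)" using y by (simp add: segment_convex_hull)
  hence "\<bar>cross (p j - p v) (p k - p v)\<bar> \<le> cmod (y - p v) * cmod (p k - p j)"
    by (rule abs_cross_le_dist_segment)
  moreover have "sin e * (diam_verts p f)^2 / 2 \<le> \<bar>cross (p j - p v) (p k - p v)\<bar>"
    using face_cross_ge_diam[of v j k] f jk by simp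
  moreover have "cmod (p k - p j) \<le> diam_verts p f" using jk face_finite[OF f(1)] by (intro diam_verts_ge) auto
  ultimately have "sin e * (diam_verts p f)^2 / 2 \<le> cmod (y - p v) * diam_verts p f"
    by (smt (verit) mult_left_mono norm_ge_zero)
  hence "sin e * diam_verts p f / 2 \<le> cmod (y - p v)"
    using face_diam_pos[OF f(1)] by (simp add: power2_eq_square field_simps)
  moreover have "min_edge v \<le> diam_verts p f"
  proof -
    have "j \<in> nbrs F v" using f jk by (auto simp: nbrs_iff)
    hence "min_edge v \<le> cmod (p j - p v)" by (rule min_edge_le[OF v])
    also have "\<dots> \<le> diam_verts p f" using jk face_finite[OF f(1)] by (intro diam_verts_ge) auto
    finally show ?thesis .
  qed
  hence "sin e / 2 * min_edge v \<le> sin e * diam_verts p f / 2" using sin_e by simp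
  ultimately show ?thesis by linarith
qed

text \<open>Near \<open>p v\<close> the star of \<open>v\<close> is the only closed set of the cover by faces; connectedness of the
  ball does the rest.\<close>

lemma ball_subset_vertex_star: assumes v: "v \<in> V" shows "ball (p v) (sin e / 2 * min_edge v) \<subseteq> vertex_star v"
proof -
  define B where "B = ball (p v) (sin e / 2 * min_edge v)"
  define S where "S = (\<Union>f\<in>{f \<in> F. v \<notin> f}. face_hull f)"
  have cover: "B \<subseteq> vertex_star v \<union> S" unfolding vertex_star_def S_def using face_hulls_cover by blast
  have closed: "closed (vertex_star v)" "closed S"
    unfolding vertex_star_def S_def by (rule closed_Union_face_hulls)+
  have disjoint: "vertex_star v \<inter> S \<inter> B = {}"
  proof (rule ccontr)
    assume "vertex_star v \<inter> S \<inter> B \<noteq> {}"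
    then obtain y f g where y: "f \<in> F" "v \<in> f" "g \<in> F" "v \<notin> g" "y \<in> face_hull f" "y \<in> face_hull g" "y \<in> B"
      unfolding vertex_star_def S_def by blast
    have "y \<in> face_hull (f \<inter> g)" using face_hull_Int[OF y(1,3)] y(5,6) by blast
    moreover have "face_hull (f \<inter> g) \<subseteq> face_hull (f - {v})" using y(4) by (intro hull_mono image_mono) auto
    ultimately have "sin e / 2 * min_edge v \<le> cmod (y - p v)" using dist_opposite_side_ge[OF y(1,2) v] by blast
    thus False using y(7) unfolding B_def by (simp add: dist_norm norm_minus_commute)
  qed
  have "p v \<in> vertex_star v \<inter> B"
  proof -
    obtain f where "f \<in> F" "v \<in> f" using vertex_in_face[OF v] by blast
    hence "p v \<in> vertex_star v" unfolding vertex_star_def using vertex_in_face_hull by blast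
    moreover have "p v \<in> B" unfolding B_def using sin_e min_edge_pos[OF v] by simp
    ultimately show ?thesis by blast
  qed
  hence "S \<inter> B = {}"
    using connected_closedD[OF connected_ball disjoint[unfolded B_def] cover[unfolded B_def] closed]
    unfolding B_def by blast
  thus ?thesis using cover unfolding B_def by blast
qed

lemma exists_ball_in_face_near_vertex:
  assumes f: "f \<in> F" "v \<in> f" and v: "v \<in> V"
  shows "\<exists>c. ball c (sin e * min_edge v / 12) \<subseteq> face_hull f \<inter> ball (p v) (2 * min_edge v)"
proof -
  obtain j k where jk: "f = {v, j, k}" "v \<noteq> j" "j \<noteq> k" "v \<noteq> k" using face_vertices_at[OF f] .
  define P where "P = p j - p v"
  define Q where "Q = p k - p v"
  have "j \<in> nbrs F v" "k \<in> nbrs F v" using f jk by (auto simp: nbrs_iff)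
  hence \<delta>: "0 < min_edge v" "min_edge v \<le> cmod P" "min_edge v \<le> cmod Q"
    using min_edge_pos[OF v] min_edge_le[OF v] by (auto simp: P_def Q_def)
  have "cmod P \<le> diam_verts p f" "cmod Q \<le> diam_verts p f"
    unfolding P_def Q_def using jk face_finite[OF f(1)] by (auto intro!: diam_verts_ge)
  hence "cmod P * cmod Q \<le> (diam_verts p f)^2"
    unfolding power2_eq_square by (intro mult_mono) (auto intro: order_trans[OF norm_ge_zero])
  hence "sin e / 2 * cmod P * cmod Q \<le> sin e * (diam_verts p f)^2 / 2" using sin_e by simp
  also have "\<dots> \<le> \<bar>cross P Q\<bar>" using face_cross_ge_diam[of v j k] f jk by (simp add: P_def Q_def)
  finally have fat: "sin e / 2 * cmod P * cmod Q \<le> \<bar>cross P Q\<bar>" .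
  have "convex hull {p v, p v + P, p v + Q} = face_hull f" by (simp add: P_def Q_def jk)
  moreover have "sin e / 2 * min_edge v / 6 = sin e * min_edge v / 12" by simp
  ultimately show ?thesis
    using ball_near_corner_subset_triangle[OF \<delta> _ fat, of "p v"] sin_e by (metis half_gt_zero)
qed

definition max_degree :: nat where
  "max_degree = nat \<lceil>(24 / sin e)^2\<rceil>"

text \<open>The faces at \<open>v\<close> contain disjoint balls of radius comparable to \<open>min_edge v\<close> inside a ball of
  radius \<open>2 min_edge v\<close>; comparing areas bounds their number.\<close>

lemma card_faces_at_le: assumes v: "v \<in> V" shows "card {f \<in> F. v \<in> f} \<le> max_degree"
proof -
  define I where "I = {f \<in> F. v \<in> f}"
  define \<delta> where "\<delta> = min_edge v"
  define r where "r = sin e * \<delta> / 12"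
  have "r > 0" using min_edge_pos[OF v] sin_e by (simp add: r_def \<delta>_def)
  obtain c where c: "\<forall>f\<in>I. ball (c f) r \<subseteq> face_hull f \<inter> ball (p v) (2 * \<delta>)"
    using bchoice[of I "\<lambda>f c. ball c r \<subseteq> face_hull f \<inter> ball (p v) (2 * \<delta>)"]
      exists_ball_in_face_near_vertex v unfolding I_def r_def \<delta>_def by blast
  have "(\<Sum>f\<in>I. r^2) \<le> (2 * \<delta>)^2"
  proof (rule sum_square_radii_le_if_disjoint_balls)
    show "finite I" using finite_faces_at[OF v] by (simp add: I_def)
    show "ball (c f) r \<inter> ball (c g) r = {}" if "f \<in> I" "g \<in> I" "f \<noteq> g" for f g
      using that c by (intro disjoint_balls_in_distinct_faces) (auto simp: I_def)
  qed (use \<open>r > 0\<close> c in auto)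
  hence "real (card I) \<le> (2 * \<delta>)^2 / r^2" using \<open>r > 0\<close> by (simp add: field_simps)
  also have "\<dots> = (24 / sin e)^2"
    using min_edge_pos[OF v] sin_e unfolding r_def \<delta>_def by (simp add: field_simps power2_eq_square)
  finally show ?thesis unfolding max_degree_def I_def by linarith
qed

lemma link_rel_edge_le: assumes "link_rel F v j k" shows "cmod (p j - p v) \<le> 2 / sin e * cmod (p k - p v)"
proof -
  have f: "{v, j, k} \<in> F" "j \<noteq> k" "j \<noteq> v" "k \<noteq> v" using assms by (auto simp: link_rel_def)
  have "cmod (p j - p v) \<le> diam_verts p {v, j, k}" by (rule diam_verts_ge) auto
  moreover have "sin e * diam_verts p {v, j, k} / 2 \<le> cmod (p k - p v)"
    using face_side_ge_diam[OF f(1), of v k] f by auto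
  ultimately show ?thesis using sin_e by (simp add: field_simps) (smt (verit) mult_left_mono)
qed

lemma link_rel_relpow_edge_le:
  assumes "(j, k) \<in> {(j, k). link_rel F v j k} ^^ n"
  shows "cmod (p j - p v) \<le> (2 / sin e) ^ n * cmod (p k - p v)"
  using assms
proof (induction n arbitrary: k)
  case (Suc n)
  then obtain m where m: "(j, m) \<in> {(j, k). link_rel F v j k} ^^ n" "link_rel F v m k" by auto
  have "cmod (p j - p v) \<le> (2 / sin e) ^ n * cmod (p m - p v)" using Suc.IH[OF m(1)] .
  also have "\<dots> \<le> (2 / sin e) ^ n * (2 / sin e * cmod (p k - p v))"
    using link_rel_edge_le[OF m(2)] sin_e by (intro mult_left_mono) auto
  finally show ?case by (simp add: algebra_simps)
qed simp

definition link_steps :: nat where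
  "link_steps = (3 * max_degree)^2"

text \<open>Any two neighbours of \<open>v\<close> are joined by a path in the (connected) link of \<open>v\<close>, whose length is
  bounded because the link has at most \<open>3 max_degree\<close> vertices.\<close>

lemma link_path_length:
  assumes v: "v \<in> V" and j: "j \<in> nbrs F v" and k: "k \<in> nbrs F v"
  shows "\<exists>n\<le>link_steps. (j, k) \<in> {(j, k). link_rel F v j k} ^^ n"
proof -
  define R where "R = {(j, k). link_rel F v j k}"
  define L where "L = \<Union>{f \<in> F. v \<in> f}"
  have link: "i \<in> link_vertices F v" if i: "i \<in> nbrs F v" for i
  proof -
    obtain f where f: "f \<in> F" "v \<in> f" "i \<in> f" "v \<noteq> i" using i by (auto simp: nbrs_iff)
    obtain a b c where "f = {a, b, c}" "a \<noteq> b" "b \<noteq> c" "a \<noteq> c" using face_vertices[OF f(1)] .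
    then obtain l where "f = {v, i, l}" "l \<noteq> v" "l \<noteq> i" using f by (auto simp: insert_commute)
    thus ?thesis using f by (auto simp: link_rel_def link_vertices_def)
  qed
  have "(link_rel F v)\<^sup>*\<^sup>* j k" using surf v link[OF j] link[OF k] unfolding tri_surface_def by blast
  hence "(j, k) \<in> R\<^sup>*" unfolding R_def by (induction rule: rtranclp_induct) (auto intro: rtrancl_into_rtrancl)
  have "finite L" using finite_faces_at[OF v] face_finite by (auto simp: L_def)
  have "card L \<le> (\<Sum>f\<in>{f \<in> F. v \<in> f}. card f)"
    unfolding L_def using card_Union_le_sum_card[of "{f \<in> F. v \<in> f}"] by simp
  also have "\<dots> = 3 * card {f \<in> F. v \<in> f}" using card_face by simp
  also have "\<dots> \<le> 3 * max_degree" using card_faces_at_le[OF v] by simp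
  finally have "card L \<le> 3 * max_degree" .
  have "R \<subseteq> L \<times> L" unfolding R_def L_def link_rel_def by auto
  hence "finite R" "card R \<le> card L * card L"
    using \<open>finite L\<close> card_mono[of "L \<times> L" R] by (auto simp: card_cartesian_product intro: finite_subset)
  moreover have "card L * card L \<le> link_steps"
    using \<open>card L \<le> 3 * max_degree\<close> unfolding link_steps_def power2_eq_square by (intro mult_le_mono)
  moreover obtain n where "n \<le> card R" "(j, k) \<in> R ^^ n"
    using \<open>(j, k) \<in> R\<^sup>*\<close> rtrancl_finite_eq_relpow[OF \<open>finite R\<close>] by auto
  ultimately show ?thesis unfolding R_def by (intro exI[of _ n] conjI) auto
qed

lemma max_edge_le_min_edge: assumes v: "v \<in> V" shows "max_edge v \<le> (2 / sin e) ^ link_steps * min_edge v"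
proof -
  obtain j where j: "j \<in> nbrs F v" "max_edge v = cmod (p j - p v)" using max_edge_attained[OF v] .
  obtain k where k: "k \<in> nbrs F v" "min_edge v = cmod (p k - p v)" using min_edge_attained[OF v] .
  obtain n where n: "n \<le> link_steps" "(j, k) \<in> {(j, k). link_rel F v j k} ^^ n"
    using link_path_length[OF v j(1) k(1)] by blast
  have "max_edge v \<le> (2 / sin e) ^ n * min_edge v"
    using link_rel_relpow_edge_le[OF n(2)] j k by simp
  also have "\<dots> \<le> (2 / sin e) ^ link_steps * min_edge v"
  proof (intro mult_right_mono power_increasing)
    have "sin e \<le> 2" using sin_le_one[of e] by linarith
    thus "1 \<le> 2 / sin e" using le_divide_eq_1_pos[OF sin_e(1), of 2] by blast
  qed (use n(1) min_edge_pos[OF v] in auto)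
  finally show ?thesis .
qed

definition origin_radius :: real where
  "origin_radius = Max (insert 0 ((\<lambda>i. cmod (p i)) ` \<Union>{f \<in> F. 0 \<in> face_hull f}))"

definition far_ratio :: real where
  "far_ratio = (2 / sin e) ^ link_steps * (2 / sin e)"

lemma finite_vertices_near:
  assumes "compact K" shows "finite (\<Union>{f \<in> F. face_hull f \<inter> K \<noteq> {}})"
  using finite_faces_meeting_compact[OF assms] face_finite by auto

lemma norm_le_origin_radius: "f \<in> F \<Longrightarrow> 0 \<in> face_hull f \<Longrightarrow> i \<in> f \<Longrightarrow> cmod (p i) \<le> origin_radius"
  unfolding origin_radius_def using finite_vertices_near[of "{0}"] by (intro Max_ge) auto

lemma origin_radius_nonneg: "0 \<le> origin_radius"
  unfolding origin_radius_def using finite_vertices_near[of "{0}"] by (intro Max_ge) auto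

lemma far_ratio_pos: "0 < far_ratio"
  unfolding far_ratio_def using sin_e by simp

text \<open>A vertex far from the origin has a star avoiding the origin, hence edges short compared to its norm.\<close>

lemma max_edge_le_far:
  assumes v: "v \<in> V" and far: "origin_radius < cmod (p v)"
  shows "max_edge v \<le> far_ratio * cmod (p v)"
proof -
  have "0 \<notin> vertex_star v"
  proof
    assume "0 \<in> vertex_star v"
    then obtain f where "f \<in> F" "v \<in> f" "0 \<in> face_hull f" unfolding vertex_star_def by blast
    thus False using norm_le_origin_radius far by fastforce
  qed
  hence "0 \<notin> ball (p v) (sin e / 2 * min_edge v)" using ball_subset_vertex_star[OF v] by blast
  hence "min_edge v \<le> 2 / sin e * cmod (p v)" using sin_e by (simp add: dist_norm field_simps)
  hence "(2 / sin e) ^ link_steps * min_edge v \<le> (2 / sin e) ^ link_steps * (2 / sin e * cmod (p v))"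
    using sin_e by (intro mult_left_mono) auto
  thus ?thesis using max_edge_le_min_edge[OF v] by (simp add: far_ratio_def algebra_simps)
qed

lemma norm_le_far_face:
  assumes f: "f \<in> F" and far: "\<And>x. x \<in> f \<Longrightarrow> origin_radius < cmod (p x)" and x: "x \<in> f" and y: "y \<in> f"
  shows "cmod (p x) \<le> (1 + far_ratio) * cmod (p y)"
proof -
  have "cmod (p x - p y) \<le> far_ratio * cmod (p y)"
  proof (cases "x = y")
    case False
    hence "x \<in> nbrs F y" using f x y by (auto simp: nbrs_iff)
    hence "cmod (p x - p y) \<le> max_edge y" using max_edge_ge f y face_subset by blast
    also have "\<dots> \<le> far_ratio * cmod (p y)" using max_edge_le_far far[OF y] f y face_subset by blast
    finally show ?thesis .
  qed (use far_ratio_pos in simp)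
  moreover have "cmod (p x) \<le> cmod (p x - p y) + cmod (p y)" by (metis diff_add_cancel norm_triangle_ineq)
  ultimately show ?thesis by (simp add: algebra_simps)
qed

definition core_radius :: real where
  "core_radius = Max (insert origin_radius ((\<lambda>i. cmod (p i)) ` \<Union>{f \<in> F. face_hull f \<inter> cball 0 origin_radius \<noteq> {}}))"

lemma norm_le_core_radius:
  assumes "f \<in> F" "y \<in> f" "cmod (p y) \<le> origin_radius" "x \<in> f"
  shows "cmod (p x) \<le> core_radius"
proof -
  have "p y \<in> face_hull f \<inter> cball 0 origin_radius" using vertex_in_face_hull[OF assms(2)] assms(3) by simp
  hence "x \<in> \<Union>{f \<in> F. face_hull f \<inter> cball 0 origin_radius \<noteq> {}}" using assms(1,4) by blast
  thus ?thesis unfolding core_radius_def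
    using finite_vertices_near[of "cball 0 origin_radius"] by (intro Max_ge) auto
qed

lemma origin_radius_le_core_radius: "origin_radius \<le> core_radius"
  unfolding core_radius_def using finite_vertices_near[of "cball 0 origin_radius"] by (intro Max_ge) auto

definition centroid :: "'v set \<Rightarrow> complex" where
  "centroid f = (\<Sum>i\<in>f. p i) / 3"

lemma ball_centroid_subset_face:
  assumes f: "f \<in> F" shows "ball (centroid f) (sin e * diam_verts p f / 6) \<subseteq> face_hull f"
proof -
  obtain a b c where abc: "f = {a, b, c}" "a \<noteq> b" "b \<noteq> c" "a \<noteq> c" using face_vertices[OF f] .
  have D: "0 < diam_verts p f" using face_diam_pos[OF f] .
  have "sin e * diam_verts p f / 6 = (sin e * (diam_verts p f)^2 / 2) / (3 * diam_verts p f)"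
    using D by (simp add: field_simps power2_eq_square)
  also have "\<dots> \<le> \<bar>cross (p b - p a) (p c - p a)\<bar> / (3 * diam_verts p f)"
    using face_cross_ge_diam[of a b c] f abc D by (intro divide_right_mono) auto
  finally have r: "sin e * diam_verts p f / 6 \<le> \<bar>cross (p b - p a) (p c - p a)\<bar> / (3 * diam_verts p f)" .
  have c: "centroid f = (p a + p b + p c) / 3" unfolding centroid_def abc(1) using abc by (simp add: add.assoc)
  have "ball (centroid f) (sin e * diam_verts p f / 6)
      \<subseteq> ball ((p a + p b + p c) / 3) (\<bar>cross (p b - p a) (p c - p a)\<bar> / (3 * diam_verts p f))"
    unfolding c by (rule subset_ball[OF r])
  also have "\<dots> \<subseteq> face_hull f"
    using ball_centroid_subset_triangle[OF face_cross_nonzero[of a b c]] f abc face_finite[OF f]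
    by (simp add: diam_verts_ge)
  finally show ?thesis .
qed

end

section \<open>Dyadic cutoffs\<close>

definition ramp :: "real \<Rightarrow> real \<Rightarrow> real" where
  "ramp s r = max 0 (min 1 (2 - r / s))"

lemma ramp_bounds: "0 \<le> ramp s r" "ramp s r \<le> 1"
  unfolding ramp_def by auto

lemma ramp_eq_1: "0 < s \<Longrightarrow> r \<le> s \<Longrightarrow> ramp s r = 1"
  unfolding ramp_def by (simp add: field_simps)

lemma ramp_eq_0: "0 < s \<Longrightarrow> 2 * s \<le> r \<Longrightarrow> ramp s r = 0"
  unfolding ramp_def by (simp add: field_simps)

lemma ramp_lipschitz: assumes "0 < s" shows "\<bar>ramp s r1 - ramp s r2\<bar> \<le> \<bar>r1 - r2\<bar> / s"
proof -
  have "\<bar>ramp s r1 - ramp s r2\<bar> \<le> \<bar>(2 - r1 / s) - (2 - r2 / s)\<bar>"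
    unfolding ramp_def by (simp add: max_def min_def abs_if)
  also have "\<dots> = \<bar>(r2 - r1) / s\<bar>" by (simp add: diff_divide_distrib)
  also have "\<dots> = \<bar>r1 - r2\<bar> / s" using assms by (simp add: abs_div abs_minus_commute)
  finally show ?thesis .
qed

context fat_triangulation
begin

lemma osc_ramp_nonzero_imp:
  assumes f: "f \<in> F" and s: "core_radius < s" and nz: "osc (\<lambda>i. ramp s (cmod (p i))) f \<noteq> 0"
  shows "\<exists>x\<in>f. s < cmod (p x)" "\<exists>y\<in>f. cmod (p y) < 2 * s" "\<And>x. x \<in> f \<Longrightarrow> origin_radius < cmod (p x)"
proof -
  have fin: "finite f" and ne: "f \<noteq> {}" using face_finite[OF f] face_nonempty[OF f] by auto
  have s0: "0 < s" using s origin_radius_le_core_radius origin_radius_nonneg by linarith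
  have const: False if "\<And>i. i \<in> f \<Longrightarrow> ramp s (cmod (p i)) = c" for c
  proof -
    have "osc (\<lambda>i. ramp s (cmod (p i))) f \<le> 0" using that by (intro osc_le[OF fin ne]) auto
    thus False using nz osc_nonneg[OF fin ne] by (meson order.antisym)
  qed
  show ex: "\<exists>x\<in>f. s < cmod (p x)" using const[of 1] ramp_eq_1[OF s0] by (meson not_less)
  show "\<exists>y\<in>f. cmod (p y) < 2 * s" using const[of 0] ramp_eq_0[OF s0] by (meson not_less)
  show "origin_radius < cmod (p x)" if "x \<in> f" for x
    using ex s norm_le_core_radius[OF f that] by force
qed

lemma osc_ramp_le_diam:
  assumes f: "f \<in> F" and s0: "0 < s"
  shows "osc (\<lambda>i. ramp s (cmod (p i))) f \<le> diam_verts p f / s"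
proof (rule osc_le)
  show "finite f" "f \<noteq> {}" using face_finite[OF f] face_nonempty[OF f] by auto
  fix i j assume ij: "i \<in> f" "j \<in> f"
  have "\<bar>ramp s (cmod (p i)) - ramp s (cmod (p j))\<bar> \<le> \<bar>cmod (p i) - cmod (p j)\<bar> / s"
    by (rule ramp_lipschitz[OF s0])
  also have "\<dots> \<le> cmod (p i - p j) / s" using s0 by (intro divide_right_mono norm_triangle_ineq3) auto
  also have "\<dots> \<le> diam_verts p f / s" using s0 diam_verts_ge[OF face_finite[OF f] ij] by (intro divide_right_mono) auto
  finally show "\<bar>ramp s (cmod (p i)) - ramp s (cmod (p j))\<bar> \<le> diam_verts p f / s" .
qed

definition ramp_energy_bound :: real where
  "ramp_energy_bound = 144 * (1 + far_ratio)^2 / (sin e)^2"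

lemma ball_centroid_subset_if_osc_ramp_nonzero:
  assumes f: "f \<in> F" and s: "core_radius < s" and nz: "osc (\<lambda>i. ramp s (cmod (p i))) f \<noteq> 0"
  shows "ball (centroid f) (sin e * diam_verts p f / 6) \<subseteq> ball 0 ((1 + far_ratio) * (2 * s))"
proof -
  obtain y where y: "y \<in> f" "cmod (p y) < 2 * s" using osc_ramp_nonzero_imp(2)[OF f s nz] by blast
  have "cmod (p x) < (1 + far_ratio) * (2 * s)" if "x \<in> f" for x
  proof -
    have "cmod (p x) \<le> (1 + far_ratio) * cmod (p y)"
      by (rule norm_le_far_face[OF f osc_ramp_nonzero_imp(3)[OF f s nz] that y(1)])
    also have "\<dots> < (1 + far_ratio) * (2 * s)" using y(2) far_ratio_pos by simp
    finally show ?thesis .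
  qed
  hence "face_hull f \<subseteq> ball 0 ((1 + far_ratio) * (2 * s))" by (intro hull_minimal) auto
  thus ?thesis using ball_centroid_subset_face[OF f] by blast
qed

text \<open>The active faces at scale \<open>s\<close> contain disjoint balls of radius \<open>\<sim> diam\<close> inside a ball of radius
  \<open>\<sim> s\<close>, so the sum of their \<open>(diam / s)\<^sup>2\<close> is bounded.\<close>

lemma sum_osc_ramp_le:
  assumes FS: "finite FS" "FS \<subseteq> F" and s: "core_radius < s"
  shows "(\<Sum>f\<in>FS. (osc (\<lambda>i. ramp s (cmod (p i))) f)^2) \<le> ramp_energy_bound"
proof -
  define osc_s where "osc_s = (\<lambda>f. osc (\<lambda>i. ramp s (cmod (p i))) f)"
  define S where "S = {f \<in> FS. osc_s f \<noteq> 0}"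
  define R where "R = (1 + far_ratio) * (2 * s)"
  have s0: "0 < s" using s origin_radius_le_core_radius origin_radius_nonneg by linarith
  have SF: "S \<subseteq> F" using FS by (auto simp: S_def)
  have pack: "(\<Sum>f\<in>S. (sin e * diam_verts p f / 6)^2) \<le> R^2"
  proof (rule sum_square_radii_le_if_disjoint_balls)
    show "finite S" using FS by (simp add: S_def)
    show "0 < sin e * diam_verts p f / 6" if "f \<in> S" for f using that SF face_diam_pos sin_e by auto
    show "ball (centroid f) (sin e * diam_verts p f / 6) \<inter> ball (centroid g) (sin e * diam_verts p g / 6) = {}"
      if "f \<in> S" "g \<in> S" "f \<noteq> g" for f g
      using that SF ball_centroid_subset_face by (intro disjoint_balls_in_distinct_faces) auto
  qed (use SF ball_centroid_subset_if_osc_ramp_nonzero[OF _ s] in \<open>auto simp: S_def osc_s_def R_def\<close>)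
  have osc_le: "(osc_s f)^2 \<le> (6 / (sin e * s))^2 * (sin e * diam_verts p f / 6)^2" if "f \<in> S" for f
  proof -
    have "f \<in> F" using that SF by auto
    hence "(osc_s f)^2 \<le> (diam_verts p f / s)^2"
      using osc_ramp_le_diam[OF _ s0] osc_nonneg[OF face_finite face_nonempty] unfolding osc_s_def
      by (intro power_mono) auto
    also have "\<dots> = (6 / (sin e * s))^2 * (sin e * diam_verts p f / 6)^2"
      using sin_e s0 by (simp add: field_simps)
    finally show ?thesis .
  qed
  have "(\<Sum>f\<in>FS. (osc_s f)^2) = (\<Sum>f\<in>S. (osc_s f)^2)"
    by (rule sum.mono_neutral_right) (use FS in \<open>auto simp: S_def\<close>)
  also have "\<dots> \<le> (\<Sum>f\<in>S. (6 / (sin e * s))^2 * (sin e * diam_verts p f / 6)^2)"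
    by (rule sum_mono[OF osc_le])
  also have "\<dots> \<le> (6 / (sin e * s))^2 * R^2"
    unfolding sum_distrib_left[symmetric] by (rule mult_left_mono[OF pack]) simp
  also have "\<dots> = ramp_energy_bound"
    using sin_e s0 unfolding ramp_energy_bound_def R_def by (simp add: field_simps power2_eq_square)
  finally show ?thesis unfolding osc_s_def .
qed

text \<open>The average of the ramps at the scales \<open>R, 2R, \<dots>, 2\<^sup>N\<^sup>-\<^sup>1R\<close>: a discrete logarithmic cutoff, whose
  energy decays like \<open>1/N\<close> because each face is active at boundedly many scales.\<close>

definition log_cutoff :: "real \<Rightarrow> nat \<Rightarrow> 'v \<Rightarrow> real" where
  "log_cutoff R N i = (if i \<in> V then (\<Sum>n<N. ramp (2^n * R) (cmod (p i))) / N else 0)"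

lemma log_cutoff_bounds: "0 < N \<Longrightarrow> 0 \<le> log_cutoff R N i \<and> log_cutoff R N i \<le> 1"
proof -
  assume "0 < N"
  have "0 \<le> (\<Sum>n<N. ramp (2^n * R) (cmod (p i)))" using ramp_bounds by (intro sum_nonneg) auto
  moreover have "(\<Sum>n<N. ramp (2^n * R) (cmod (p i))) \<le> (\<Sum>n<N. 1)" using ramp_bounds by (intro sum_mono) auto
  ultimately show ?thesis using \<open>0 < N\<close> by (simp add: log_cutoff_def field_simps)
qed

lemma log_cutoff_eq_1: "0 < R \<Longrightarrow> 0 < N \<Longrightarrow> i \<in> V \<Longrightarrow> cmod (p i) \<le> R \<Longrightarrow> log_cutoff R N i = 1"
proof -
  assume "0 < R" "0 < N" "i \<in> V" "cmod (p i) \<le> R"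
  hence "ramp (2^n * R) (cmod (p i)) = 1" for n
    by (intro ramp_eq_1) (auto intro: order_trans[of _ R] simp: mult_le_cancel_right1)
  thus ?thesis using \<open>0 < N\<close> \<open>i \<in> V\<close> by (simp add: log_cutoff_def)
qed

lemma log_cutoff_eq_0: "0 < R \<Longrightarrow> 2^N * R \<le> cmod (p i) \<Longrightarrow> log_cutoff R N i = 0"
proof -
  assume R: "0 < R" and i: "2^N * R \<le> cmod (p i)"
  have "ramp (2^n * R) (cmod (p i)) = 0" if "n < N" for n
  proof (rule ramp_eq_0)
    have "(2::real) ^ Suc n \<le> 2 ^ N" using that by (intro power_increasing) auto
    hence "2 * (2^n * R) \<le> 2^N * R" using R by (simp add: mult_right_mono)
    thus "2 * (2^n * R) \<le> cmod (p i)" using i by linarith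
  qed (use R in simp)
  thus ?thesis by (simp add: log_cutoff_def)
qed

lemma core_radius_lt_scale: "core_radius < R \<Longrightarrow> core_radius < 2^n * R"
proof -
  assume R: "core_radius < R"
  hence "0 < R" using origin_radius_le_core_radius origin_radius_nonneg by linarith
  hence "R \<le> 2^n * R" by simp
  thus ?thesis using R by linarith
qed

lemma card_active_scales:
  assumes f: "f \<in> F" and R: "core_radius < R" and b: "1 + far_ratio < 2 ^ b"
  shows "card {n. n < N \<and> osc (\<lambda>i. ramp (2^n * R) (cmod (p i))) f \<noteq> 0} \<le> b + 1"
proof -
  define J where "J = {n. n < N \<and> osc (\<lambda>i. ramp (2^n * R) (cmod (p i))) f \<noteq> 0}"
  have R0: "0 < R" using R origin_radius_le_core_radius origin_radius_nonneg by linarith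
  note scale = core_radius_lt_scale[OF R]
  have "card J \<le> b + 1"
  proof (cases "J = {}")
    case False
    define m where "m = Min J"
    have "finite J" by (simp add: J_def)
    hence "m \<in> J" using False by (simp add: m_def)
    then obtain y where y: "y \<in> f" "cmod (p y) < 2 * (2^m * R)"
      using osc_ramp_nonzero_imp(2)[OF f scale] unfolding J_def by blast
    have "J \<subseteq> {m..m + b}"
    proof
      fix n assume n: "n \<in> J"
      have "m \<le> n" using \<open>finite J\<close> n by (simp add: m_def)
      have nz: "osc (\<lambda>i. ramp (2^n * R) (cmod (p i))) f \<noteq> 0" using n by (simp add: J_def)
      obtain x where x: "x \<in> f" "2^n * R < cmod (p x)" using osc_ramp_nonzero_imp(1)[OF f scale nz] by blast
      have "cmod (p x) \<le> (1 + far_ratio) * cmod (p y)"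
        using norm_le_far_face[OF f osc_ramp_nonzero_imp(3)[OF f scale nz] x(1) y(1)] .
      also have "\<dots> < 2 ^ b * (2 * (2^m * R))"
        by (rule mult_strict_mono[OF b y(2)]) auto
      finally have "(2::real) ^ n * R < 2 ^ (b + m + 1) * R" using x(2) by (simp add: power_add algebra_simps)
      hence "(2::real) ^ n < 2 ^ (b + m + 1)" using R0 by simp
      hence "n < b + m + 1" by (intro power_less_imp_less_exp[of "2::real"]) simp_all
      thus "n \<in> {m..m + b}" using \<open>m \<le> n\<close> by simp
    qed
    hence "card J \<le> card {m..m + b}" by (intro card_mono) auto
    thus ?thesis by simp
  qed simp
  thus ?thesis by (simp add: J_def)
qed

lemma osc_log_cutoff_sq_le:
  assumes f: "f \<in> F" and R: "core_radius < R" and b: "1 + far_ratio < 2 ^ b" and N: "0 < N"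
  shows "(osc (log_cutoff R N) f)^2 \<le> real (b + 1) / N^2 * (\<Sum>n<N. (osc (\<lambda>i. ramp (2^n * R) (cmod (p i))) f)^2)"
proof -
  define d where "d = (\<lambda>n. osc (\<lambda>i. ramp (2^n * R) (cmod (p i))) f)"
  define J where "J = {n. n < N \<and> d n \<noteq> 0}"
  have fin: "finite f" "f \<noteq> {}" using face_finite[OF f] face_nonempty[OF f] by auto
  have "osc (log_cutoff R N) f \<le> (\<Sum>n<N. d n) / N"
  proof (rule osc_le[OF fin])
    fix i j assume ij: "i \<in> f" "j \<in> f"
    hence "log_cutoff R N i - log_cutoff R N j = (\<Sum>n<N. ramp (2^n * R) (cmod (p i)) - ramp (2^n * R) (cmod (p j))) / N"
      using face_subset[OF f] by (auto simp: log_cutoff_def sum_subtractf diff_divide_distrib)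
    also have "\<bar>\<dots>\<bar> \<le> (\<Sum>n<N. d n) / N"
      using N ij fin unfolding d_def
      by (auto simp: abs_div intro!: divide_right_mono order_trans[OF sum_abs] sum_mono osc_ge)
    finally show "\<bar>log_cutoff R N i - log_cutoff R N j\<bar> \<le> (\<Sum>n<N. d n) / N" .
  qed
  moreover have "(\<Sum>n<N. d n) = (\<Sum>n\<in>J. d n)" by (rule sum.mono_neutral_right) (auto simp: J_def)
  ultimately have "(osc (log_cutoff R N) f)^2 \<le> ((\<Sum>n\<in>J. d n) / N)^2"
    using osc_nonneg[OF fin] by (intro power_mono) auto
  also have "\<dots> \<le> (\<Sum>n\<in>J. (d n)^2) * real (card J) / N^2"
    by (simp add: power_divide) (intro divide_right_mono sum_squared_le_sum_of_squares; simp add: J_def)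
  also have "\<dots> \<le> (\<Sum>n<N. (d n)^2) * real (b + 1) / N^2"
  proof (intro divide_right_mono mult_mono)
    show "(\<Sum>n\<in>J. (d n)^2) \<le> (\<Sum>n<N. (d n)^2)" by (rule sum_mono2) (auto simp: J_def)
    show "real (card J) \<le> real (b + 1)" using card_active_scales[OF f R b, of N] by (simp add: J_def d_def)
  qed (auto intro: sum_nonneg)
  finally show ?thesis by (simp add: d_def field_simps)
qed

lemma sum_osc_log_cutoff_le:
  assumes FS: "finite FS" "FS \<subseteq> F" and R: "core_radius < R" and b: "1 + far_ratio < 2 ^ b" and N: "0 < N"
  shows "(\<Sum>f\<in>FS. (osc (log_cutoff R N) f)^2) \<le> real (b + 1) * ramp_energy_bound / N"
proof -
  have "(\<Sum>f\<in>FS. (osc (log_cutoff R N) f)^2)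
      \<le> (\<Sum>f\<in>FS. real (b + 1) / N^2 * (\<Sum>n<N. (osc (\<lambda>i. ramp (2^n * R) (cmod (p i))) f)^2))"
    using FS osc_log_cutoff_sq_le[OF _ R b N] by (intro sum_mono) auto
  also have "\<dots> = real (b + 1) / N^2 * (\<Sum>n<N. \<Sum>f\<in>FS. (osc (\<lambda>i. ramp (2^n * R) (cmod (p i))) f)^2)"
    by (simp add: sum_distrib_left sum.swap[of _ FS])
  also have "\<dots> \<le> real (b + 1) / N^2 * (\<Sum>n<N. ramp_energy_bound)"
  proof (intro mult_left_mono sum_mono)
    show "(\<Sum>f\<in>FS. (osc (\<lambda>i. ramp (2^n * R) (cmod (p i))) f)^2) \<le> ramp_energy_bound" for n
      by (rule sum_osc_ramp_le[OF FS core_radius_lt_scale[OF R]])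
  qed auto
  also have "\<dots> = real (b + 1) * ramp_energy_bound / N" using N by (simp add: power2_eq_square)
  finally show ?thesis .
qed

section \<open>Bounded harmonic functions are constant\<close>

lemma face_energy_le_log_cutoff:
  fixes N :: nat
  assumes harmonic: "\<And>i. i \<in> V \<Longrightarrow> laplacian u i = 0" and M: "\<And>i. i \<in> V \<Longrightarrow> \<bar>u i\<bar> \<le> M"
    and f0: "f0 \<in> F" and R: "core_radius < R" "\<And>i. i \<in> f0 \<Longrightarrow> cmod (p i) \<le> R"
    and b: "1 + far_ratio < 2 ^ b" and N: "0 < N"
  shows "face_energy p f0 u u \<le> 6 * (16 / sin e) * M^2 * (real (b + 1) * ramp_energy_bound) / N"
proof -
  define W where "W = {i \<in> V. cmod (p i) < 2^N * R}"
  have R0: "0 < R" using R(1) origin_radius_le_core_radius origin_radius_nonneg by linarith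
  have "W \<subseteq> \<Union>{f \<in> F. face_hull f \<inter> cball 0 (2^N * R) \<noteq> {}}"
    using vertex_in_face vertex_in_face_hull unfolding W_def by fastforce
  hence W: "finite W" "W \<subseteq> V"
    using finite_vertices_near[of "cball 0 (2^N * R)"] finite_subset unfolding W_def by auto
  have "face_energy p f0 u u
      \<le> 6 * (16 / sin e) * M^2 * (\<Sum>f\<in>{f \<in> F. f \<inter> W \<noteq> {}}. (osc (log_cutoff R N) f)^2)"
  proof (rule caccioppoli[OF W _ _ harmonic M f0])
    show "log_cutoff R N i = 0" if "i \<notin> W" for i
    proof (cases "i \<in> V")
      case True
      hence "2^N * R \<le> cmod (p i)" using that by (simp add: W_def not_less)
      thus ?thesis by (rule log_cutoff_eq_0[OF R0])
    qed (simp add: log_cutoff_def)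
    show "0 \<le> log_cutoff R N i \<and> log_cutoff R N i \<le> 1" for i by (rule log_cutoff_bounds[OF N])
    show "log_cutoff R N i = 1" if "i \<in> f0" for i
      using log_cutoff_eq_1[OF R0 N] R(2)[OF that] face_subset[OF f0] that by blast
  qed
  also have "\<dots> \<le> 6 * (16 / sin e) * M^2 * (real (b + 1) * ramp_energy_bound / N)"
    using sum_osc_log_cutoff_le[OF finite_faces_meeting[OF W] _ R(1) b N] sin_e
    by (intro mult_left_mono) auto
  finally show ?thesis by simp
qed

lemma face_energy_eq_0_if_harmonic_bounded:
  assumes harmonic: "\<And>i. i \<in> V \<Longrightarrow> laplacian u i = 0" and M: "\<And>i. i \<in> V \<Longrightarrow> \<bar>u i\<bar> \<le> M"
    and f0: "f0 \<in> F"
  shows "face_energy p f0 u u = 0"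
proof -
  obtain b :: nat where b: "1 + far_ratio < 2 ^ b" using real_arch_pow[of 2 "1 + far_ratio"] by auto
  define R where "R = max core_radius (Max ((\<lambda>i. cmod (p i)) ` f0)) + 1"
  have R: "core_radius < R" by (simp add: R_def)
  have f0R: "cmod (p i) \<le> R" if "i \<in> f0" for i
  proof -
    have "cmod (p i) \<le> Max ((\<lambda>i. cmod (p i)) ` f0)" using face_finite[OF f0] that by (intro Max_ge) auto
    thus ?thesis unfolding R_def by linarith
  qed
  define C where "C = 6 * (16 / sin e) * M^2 * (real (b + 1) * ramp_energy_bound)"
  show ?thesis
  proof (rule antisym[OF field_le_epsilon face_energy_nonneg[OF f0]])
    fix \<epsilon> :: real assume "0 < \<epsilon>"
    obtain N :: nat where N: "max 1 (C / \<epsilon>) < N" using reals_Archimedean2 by blast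
    hence "C / N \<le> \<epsilon>" using \<open>0 < \<epsilon>\<close> by (simp add: field_simps)
    moreover have "face_energy p f0 u u \<le> C / N"
      unfolding C_def using N by (intro face_energy_le_log_cutoff[OF harmonic M f0 R f0R b]) auto
    ultimately show "face_energy p f0 u u \<le> 0 + \<epsilon>" by simp
  qed
qed

lemma faces_share_vertex_if_hulls_meet:
  assumes "f \<in> F" "g \<in> F" "z \<in> face_hull f" "z \<in> face_hull g"
  shows "f \<inter> g \<noteq> {}"
  using face_hull_Int[OF assms(1,2)] assms(3,4) by auto

text \<open>The hulls of the faces on which \<open>u\<close> takes the value \<open>c\<close> and of the remaining faces are closed sets
  covering the connected plane, and they are disjoint since \<open>u\<close> is constant on faces.\<close>

lemma constant_if_constant_on_faces:
  assumes const: "\<And>f i j. f \<in> F \<Longrightarrow> i \<in> f \<Longrightarrow> j \<in> f \<Longrightarrow> u i = u j"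
  shows "\<exists>c. \<forall>i\<in>V. u i = c"
proof -
  obtain f0 where f0: "f0 \<in> F" using face_hulls_cover by blast
  then obtain a0 where a0: "a0 \<in> f0" using face_nonempty by blast
  define A where "A = (\<Union>f\<in>{f \<in> F. \<exists>i\<in>f. u i = u a0}. face_hull f)"
  define B where "B = (\<Union>f\<in>{f \<in> F. \<not> (\<exists>i\<in>f. u i = u a0)}. face_hull f)"
  have "A \<inter> B \<inter> UNIV = {}"
  proof (rule ccontr)
    assume "A \<inter> B \<inter> UNIV \<noteq> {}"
    then obtain z where "z \<in> A" "z \<in> B" by blast
    then obtain f g where f: "f \<in> F" "\<exists>i\<in>f. u i = u a0" "z \<in> face_hull f"
      and g: "g \<in> F" "\<not> (\<exists>i\<in>g. u i = u a0)" "z \<in> face_hull g"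
      unfolding A_def B_def by blast
    obtain i where i: "i \<in> f" "i \<in> g" using faces_share_vertex_if_hulls_meet[OF f(1) g(1) f(3) g(3)] by blast
    obtain j where "j \<in> f" "u j = u a0" using f(2) by blast
    hence "u i = u a0" using const[OF f(1) i(1)] by simp
    thus False using g(2) i(2) by blast
  qed
  moreover have "UNIV \<subseteq> A \<union> B"
  proof
    fix z :: complex
    obtain f where "f \<in> F" "z \<in> face_hull f" using face_hulls_cover by blast
    thus "z \<in> A \<union> B" unfolding A_def B_def by (cases "\<exists>i\<in>f. u i = u a0") blast+
  qed
  moreover have "closed A" "closed B" unfolding A_def B_def by (rule closed_Union_face_hulls)+
  ultimately have "A \<inter> UNIV = {} \<or> B \<inter> UNIV = {}" by (rule connected_closedD[OF connected_UNIV])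
  moreover have "p a0 \<in> A" unfolding A_def using f0 a0 vertex_in_face_hull[OF a0] by blast
  ultimately have B: "B = {}" by blast
  have "u i = u a0" if i: "i \<in> V" for i
  proof -
    obtain f where f: "f \<in> F" "i \<in> f" using vertex_in_face[OF i] by blast
    have "\<exists>j\<in>f. u j = u a0"
    proof (rule ccontr)
      assume "\<not> (\<exists>j\<in>f. u j = u a0)"
      hence "p i \<in> B" unfolding B_def using f vertex_in_face_hull[OF f(2)] by blast
      thus False using B by simp
    qed
    then obtain j where "j \<in> f" "u j = u a0" by blast
    thus ?thesis using const[OF f] by simp
  qed
  thus ?thesis by blast
qed

end

lemma fat_triangulation_if_unif_nondegenerate:
  assumes "tri_surface V F" "geodesic_homeo V F p" "unif_nondegenerate F p"
  shows "\<exists>e. fat_triangulation V F p e"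
proof -
  obtain \<epsilon> where \<epsilon>: "\<epsilon> > 0" "\<And>i j k. {i, j, k} \<in> F \<and> card {i, j, k} = 3 \<Longrightarrow> \<epsilon> \<le> theta p i j k"
    using assms(3) unfolding unif_nondegenerate_def by blast
  have "fat_triangulation V F p (min \<epsilon> 1)"
    using assms(1,2) \<epsilon> pi_gt3 by unfold_locales (auto simp: min_le_iff_disj)
  thus ?thesis by blast
qed

theorem proposition3p3:
  fixes V :: "'v set" and F :: "'v set set" and p :: "'v \<Rightarrow> complex" and u :: "'v \<Rightarrow> real"
  assumes "tri_surface V F"
    and "geodesic_homeo V F p"
    and "unif_nondegenerate F p"
    and "delaunay F p"
    and "bounded (u ` V)"
    and "\<forall>i\<in>V. (\<Sum>j\<in>nbrs F i. cot_weight F p i j * (u j - u i)) = 0"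
  shows "\<exists>c. \<forall>i\<in>V. u i = c"
proof -
  obtain e where "fat_triangulation V F p e"
    using fat_triangulation_if_unif_nondegenerate[OF assms(1-3)] by blast
  then interpret fat_triangulation V F p e .
  obtain M where M: "\<And>i. i \<in> V \<Longrightarrow> \<bar>u i\<bar> \<le> M" using assms(5) unfolding bounded_iff by auto
  have "face_energy p f u u = 0" if "f \<in> F" for f
    using face_energy_eq_0_if_harmonic_bounded[OF _ M that] assms(6) by (simp add: laplacian_def)
  hence "\<And>f i j. f \<in> F \<Longrightarrow> i \<in> f \<Longrightarrow> j \<in> f \<Longrightarrow> u i = u j" using face_energy_eq_0_imp_eq by blast
  thus ?thesis by (rule constant_if_constant_on_faces)
qed

end
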